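(* Let $\Lambda$ be an artin algebra, $n\ge2$, and let $f\colon X\to Y$ be an irreducible morphism in $\mathbf{C_n}({\rm proj}\,\Lambda)$ with $X$ or $Y$ indecomposable. (a) If $f$ is of type (ret), then ${\rm Ker}\,f$ is a non-zero indecomposable complex belonging to $\mathbf{C_n}({\rm proj}\,\Lambda)$. (b) If $f$ is of type (sec), then ${\rm Coker}\,f$ is an indecomposable complex belonging to $\mathbf{C_n}({\rm proj}\,\Lambda)$.
   Context: For an artin algebra $\Lambda$ and $n\ge 2$, $\mathbf{C_n}({\rm proj}\,\Lambda)$ is the full subcategory of the category of complexes of finitely generated right $\Lambda$-modules consisting of complexes $X=(X^i,d^i_X)$ with $X^i$ projective for all $i$ and $X^i=0$ for $i\notin\{1,\dots,n\}$; morphisms are chain maps. Kernels and cokernels are computed degreewise with induced differentials. A morphism in $\mathbf{C_n}({\rm proj}\,\Lambda)$ is irreducible if it is neither a section nor a retraction, and whenever $f=gh$ then $h$ is a section or $g$ is a retraction. An irreducible $f=\{f^i\}$ is of type (sec) if every $f^i$ is a section in ${\rm proj}\,\Lambda$, and of type (ret) if every $f^i$ is a retraction in ${\rm proj}\,\Lambda$. *)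

theory Defs
  imports "HOL-Algebra.Ideal"
begin

definition artinian_ring :: "('c, 'x) ring_scheme \<Rightarrow> bool" where
  "artinian_ring R \<longleftrightarrow> ring R \<and>
     (\<forall>I :: nat \<Rightarrow> 'c set. (\<forall>k. ideal (I k) R) \<and> (\<forall>k. I (Suc k) \<subseteq> I k)
         \<longrightarrow> (\<exists>N. \<forall>k\<ge>N. I k = I N))"

definition artin_algebra :: "('c, 'x) ring_scheme \<Rightarrow> ('c \<Rightarrow> 'r) \<Rightarrow> ('r, 'y) ring_scheme \<Rightarrow> bool" where
  "artin_algebra R phi L \<longleftrightarrow> ring L \<and> cring R \<and> artinian_ring R \<and>
     phi \<in> ring_hom R L \<and>
     (\<forall>c\<in>carrier R. \<forall>a\<in>carrier L. phi c \<otimes>\<^bsub>L\<^esub> a = a \<otimes>\<^bsub>L\<^esub> phi c) \<and>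
     (\<exists>S. finite S \<and> S \<subseteq> carrier L \<and>
        (\<forall>a\<in>carrier L. \<exists>c \<in> S \<rightarrow> carrier R.
            a = (\<Oplus>\<^bsub>L\<^esub>s\<in>S. phi (c s) \<otimes>\<^bsub>L\<^esub> s)))"

record ('a, 'r) rmodule = "'a ring" +
  rsmult :: "'a \<Rightarrow> 'r \<Rightarrow> 'a"

definition right_module :: "('r, 'y) ring_scheme \<Rightarrow> ('a, 'r, 'z) rmodule_scheme \<Rightarrow> bool" where
  "right_module L M \<longleftrightarrow> ring L \<and> abelian_group M \<and>
     (\<forall>x\<in>carrier M. \<forall>a\<in>carrier L. rsmult M x a \<in> carrier M) \<and>
     (\<forall>x\<in>carrier M. \<forall>y\<in>carrier M. \<forall>a\<in>carrier L.
        rsmult M (x \<oplus>\<^bsub>M\<^esub> y) a = rsmult M x a \<oplus>\<^bsub>M\<^esub> rsmult M y a) \<and>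
     (\<forall>x\<in>carrier M. \<forall>a\<in>carrier L. \<forall>b\<in>carrier L.
        rsmult M x (a \<oplus>\<^bsub>L\<^esub> b) = rsmult M x a \<oplus>\<^bsub>M\<^esub> rsmult M x b) \<and>
     (\<forall>x\<in>carrier M. \<forall>a\<in>carrier L. \<forall>b\<in>carrier L.
        rsmult M x (a \<otimes>\<^bsub>L\<^esub> b) = rsmult M (rsmult M x a) b) \<and>
     (\<forall>x\<in>carrier M. rsmult M x \<one>\<^bsub>L\<^esub> = x)"

text \<open>Module homomorphisms, taken extensional (undefined off the carrier) so that
  equality of morphisms is equality of functions.\<close>
definition mod_hom :: "('r, 'y) ring_scheme \<Rightarrow> ('a, 'r, 'z) rmodule_scheme
     \<Rightarrow> ('b, 'r, 'w) rmodule_scheme \<Rightarrow> ('a \<Rightarrow> 'b) set" where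
  "mod_hom L M N = {f. f \<in> carrier M \<rightarrow> carrier N \<and> f \<in> extensional (carrier M) \<and>
     (\<forall>x\<in>carrier M. \<forall>y\<in>carrier M. f (x \<oplus>\<^bsub>M\<^esub> y) = f x \<oplus>\<^bsub>N\<^esub> f y) \<and>
     (\<forall>x\<in>carrier M. \<forall>a\<in>carrier L. f (rsmult M x a) = rsmult N (f x) a)}"

definition submodule :: "('r, 'y) ring_scheme \<Rightarrow> 'a set \<Rightarrow> ('a, 'r, 'z) rmodule_scheme \<Rightarrow> bool" where
  "submodule L A M \<longleftrightarrow> A \<subseteq> carrier M \<and> \<zero>\<^bsub>M\<^esub> \<in> A \<and>
     (\<forall>x\<in>A. \<forall>y\<in>A. x \<oplus>\<^bsub>M\<^esub> y \<in> A) \<and> (\<forall>x\<in>A. \<ominus>\<^bsub>M\<^esub> x \<in> A) \<and>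
     (\<forall>x\<in>A. \<forall>a\<in>carrier L. rsmult M x a \<in> A)"

definition free_mod :: "('r, 'y) ring_scheme \<Rightarrow> nat \<Rightarrow> (nat \<Rightarrow> 'r, 'r) rmodule" where
  "free_mod L m = \<lparr> carrier = {0..<m} \<rightarrow>\<^sub>E carrier L,
      monoid.mult = (\<lambda>v w. undefined), one = undefined,
      zero = (\<lambda>i\<in>{0..<m}. \<zero>\<^bsub>L\<^esub>),
      add = (\<lambda>v w. \<lambda>i\<in>{0..<m}. v i \<oplus>\<^bsub>L\<^esub> w i),
      rsmult = (\<lambda>v a. \<lambda>i\<in>{0..<m}. v i \<otimes>\<^bsub>L\<^esub> a) \<rparr>"

text \<open>\<open>proj \<Lambda>\<close> = add \<open>\<Lambda>_\<Lambda>\<close>: the modules isomorphic to a direct summand of some \<open>\<Lambda>^m\<close>,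
  i.e. admitting a split epimorphism from a finitely generated free module.\<close>
definition fg_projective :: "('r, 'y) ring_scheme \<Rightarrow> ('a, 'r, 'z) rmodule_scheme \<Rightarrow> bool" where
  "fg_projective L P \<longleftrightarrow> right_module L P \<and>
     (\<exists>m p s. p \<in> mod_hom L (free_mod L m) P \<and> s \<in> mod_hom L P (free_mod L m) \<and>
              (\<forall>x\<in>carrier P. p (s x) = x))"

definition mod_section :: "('r, 'y) ring_scheme \<Rightarrow> ('a, 'r, 'z) rmodule_scheme
     \<Rightarrow> ('b, 'r, 'w) rmodule_scheme \<Rightarrow> ('a \<Rightarrow> 'b) \<Rightarrow> bool" where
  "mod_section L M N u \<longleftrightarrow> u \<in> mod_hom L M N \<and>
     (\<exists>r\<in>mod_hom L N M. \<forall>x\<in>carrier M. r (u x) = x)"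

definition mod_retraction :: "('r, 'y) ring_scheme \<Rightarrow> ('a, 'r, 'z) rmodule_scheme
     \<Rightarrow> ('b, 'r, 'w) rmodule_scheme \<Rightarrow> ('a \<Rightarrow> 'b) \<Rightarrow> bool" where
  "mod_retraction L M N u \<longleftrightarrow> u \<in> mod_hom L M N \<and>
     (\<exists>s\<in>mod_hom L N M. \<forall>y\<in>carrier N. u (s y) = y)"

record ('a, 'r) cplx =
  obj :: "int \<Rightarrow> ('a, 'r) rmodule"
  diff :: "int \<Rightarrow> 'a \<Rightarrow> 'a"

definition is_complex :: "('r, 'y) ring_scheme \<Rightarrow> ('a, 'r) cplx \<Rightarrow> bool" where
  "is_complex L X \<longleftrightarrow> (\<forall>i. right_module L (obj X i) \<and>
       diff X i \<in> mod_hom L (obj X i) (obj X (i + 1)) \<and>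
       (\<forall>x\<in>carrier (obj X i). diff X (i + 1) (diff X i x) = \<zero>\<^bsub>obj X (i + 2)\<^esub>))"

definition zero_mod :: "('a, 'r, 'z) rmodule_scheme \<Rightarrow> bool" where
  "zero_mod M \<longleftrightarrow> carrier M = {\<zero>\<^bsub>M\<^esub>}"

definition in_Cn :: "('r, 'y) ring_scheme \<Rightarrow> nat \<Rightarrow> ('a, 'r) cplx \<Rightarrow> bool" where
  "in_Cn L n X \<longleftrightarrow> is_complex L X \<and> (\<forall>i. fg_projective L (obj X i)) \<and>
     (\<forall>i. (i < 1 \<or> int n < i) \<longrightarrow> zero_mod (obj X i))"

definition chain_map :: "('r, 'y) ring_scheme \<Rightarrow> ('a, 'r) cplx \<Rightarrow> ('b, 'r) cplx
     \<Rightarrow> (int \<Rightarrow> 'a \<Rightarrow> 'b) \<Rightarrow> bool" where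
  "chain_map L X Y f \<longleftrightarrow> (\<forall>i. f i \<in> mod_hom L (obj X i) (obj Y i) \<and>
     (\<forall>x\<in>carrier (obj X i). f (i + 1) (diff X i x) = diff Y i (f i x)))"

definition cmp :: "('a, 'r) cplx \<Rightarrow> (int \<Rightarrow> 'b \<Rightarrow> 'c) \<Rightarrow> (int \<Rightarrow> 'a \<Rightarrow> 'b) \<Rightarrow> int \<Rightarrow> 'a \<Rightarrow> 'c" where
  "cmp X g h = (\<lambda>i. \<lambda>x\<in>carrier (obj X i). g i (h i x))"

definition cid :: "('a, 'r) cplx \<Rightarrow> int \<Rightarrow> 'a \<Rightarrow> 'a" where
  "cid X = (\<lambda>i. \<lambda>x\<in>carrier (obj X i). x)"

definition is_section :: "('r, 'y) ring_scheme \<Rightarrow> ('a, 'r) cplx \<Rightarrow> ('b, 'r) cplx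
     \<Rightarrow> (int \<Rightarrow> 'a \<Rightarrow> 'b) \<Rightarrow> bool" where
  "is_section L X Y f \<longleftrightarrow> chain_map L X Y f \<and>
     (\<exists>r. chain_map L Y X r \<and> cmp X r f = cid X)"

definition is_retraction :: "('r, 'y) ring_scheme \<Rightarrow> ('a, 'r) cplx \<Rightarrow> ('b, 'r) cplx
     \<Rightarrow> (int \<Rightarrow> 'a \<Rightarrow> 'b) \<Rightarrow> bool" where
  "is_retraction L X Y f \<longleftrightarrow> chain_map L X Y f \<and>
     (\<exists>s. chain_map L Y X s \<and> cmp Y f s = cid Y)"

text \<open>The intermediate object Z ranges over
  complexes whose modules have carriers in \<open>nat \<Rightarrow> 'r\<close>; every object of
  \<open>C_n(proj \<Lambda>)\<close> is isomorphic to such a complex (all terms are summands of some \<open>\<Lambda>^m\<close>).\<close>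
definition irreducible :: "('r, 'y) ring_scheme \<Rightarrow> nat \<Rightarrow> ('a, 'r) cplx \<Rightarrow> ('b, 'r) cplx
     \<Rightarrow> (int \<Rightarrow> 'a \<Rightarrow> 'b) \<Rightarrow> bool" where
  "irreducible L n X Y f \<longleftrightarrow> in_Cn L n X \<and> in_Cn L n Y \<and> chain_map L X Y f \<and>
     \<not> is_section L X Y f \<and> \<not> is_retraction L X Y f \<and>
     (\<forall>(Z :: (nat \<Rightarrow> 'r, 'r) cplx) g h. in_Cn L n Z \<and> chain_map L X Z h \<and> chain_map L Z Y g \<and>
         f = cmp X g h \<longrightarrow> is_section L X Z h \<or> is_retraction L Z Y g)"

definition type_sec :: "('r, 'y) ring_scheme \<Rightarrow> nat \<Rightarrow> ('a, 'r) cplx \<Rightarrow> ('b, 'r) cplx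
     \<Rightarrow> (int \<Rightarrow> 'a \<Rightarrow> 'b) \<Rightarrow> bool" where
  "type_sec L n X Y f \<longleftrightarrow> irreducible L n X Y f \<and>
     (\<forall>i. mod_section L (obj X i) (obj Y i) (f i))"

definition type_ret :: "('r, 'y) ring_scheme \<Rightarrow> nat \<Rightarrow> ('a, 'r) cplx \<Rightarrow> ('b, 'r) cplx
     \<Rightarrow> (int \<Rightarrow> 'a \<Rightarrow> 'b) \<Rightarrow> bool" where
  "type_ret L n X Y f \<longleftrightarrow> irreducible L n X Y f \<and>
     (\<forall>i. mod_retraction L (obj X i) (obj Y i) (f i))"

definition indecomposable :: "('r, 'y) ring_scheme \<Rightarrow> ('a, 'r) cplx \<Rightarrow> bool" where
  "indecomposable L X \<longleftrightarrow> is_complex L X \<and> \<not> (\<forall>i. zero_mod (obj X i)) \<and>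
     (\<forall>A B :: int \<Rightarrow> 'a set.
        (\<forall>i. submodule L (A i) (obj X i) \<and> submodule L (B i) (obj X i) \<and>
             diff X i ` A i \<subseteq> A (i + 1) \<and> diff X i ` B i \<subseteq> B (i + 1) \<and>
             A i \<inter> B i = {\<zero>\<^bsub>obj X i\<^esub>} \<and>
             carrier (obj X i) = {a \<oplus>\<^bsub>obj X i\<^esub> b | a b. a \<in> A i \<and> b \<in> B i})
        \<longrightarrow> (\<forall>i. A i = {\<zero>\<^bsub>obj X i\<^esub>}) \<or> (\<forall>i. B i = {\<zero>\<^bsub>obj X i\<^esub>}))"

definition ker_cplx :: "('a, 'r) cplx \<Rightarrow> ('b, 'r) cplx \<Rightarrow> (int \<Rightarrow> 'a \<Rightarrow> 'b) \<Rightarrow> ('a, 'r) cplx" where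
  "ker_cplx X Y f =
     (let K = (\<lambda>i. {x \<in> carrier (obj X i). f i x = \<zero>\<^bsub>obj Y i\<^esub>})
      in \<lparr> obj = (\<lambda>i. (obj X i)\<lparr>carrier := K i\<rparr>),
           diff = (\<lambda>i. \<lambda>x\<in>K i. diff X i x) \<rparr>)"

definition coset_of :: "('a, 'r) cplx \<Rightarrow> ('b, 'r) cplx \<Rightarrow> (int \<Rightarrow> 'a \<Rightarrow> 'b) \<Rightarrow> int \<Rightarrow> 'b \<Rightarrow> 'b set" where
  "coset_of X Y f i y = {y \<oplus>\<^bsub>obj Y i\<^esub> z | z. z \<in> f i ` carrier (obj X i)}"

definition coker_cplx :: "('a, 'r) cplx \<Rightarrow> ('b, 'r) cplx \<Rightarrow> (int \<Rightarrow> 'a \<Rightarrow> 'b) \<Rightarrow> ('b set, 'r) cplx" where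
  "coker_cplx X Y f =
     \<lparr> obj = (\<lambda>i. \<lparr> carrier = coset_of X Y f i ` carrier (obj Y i),
                    monoid.mult = (\<lambda>U V. undefined), one = undefined,
                    zero = coset_of X Y f i \<zero>\<^bsub>obj Y i\<^esub>,
                    add = (\<lambda>U V. {u \<oplus>\<^bsub>obj Y i\<^esub> v | u v. u \<in> U \<and> v \<in> V}),
                    rsmult = (\<lambda>U a. \<Union>u\<in>U. coset_of X Y f i (rsmult (obj Y i) u a)) \<rparr>),
       diff = (\<lambda>i. \<lambda>U\<in>coset_of X Y f i ` carrier (obj Y i).
                  \<Union>u\<in>U. coset_of X Y f (i + 1) (diff Y i u)) \<rparr>"

end

theory Submission
  imports Defs
begin

text \<open>Let \<open>f\<close> be irreducible of type (ret), with degreewise sections \<open>t\<close>. Each \<open>Ker f\<^sup>i\<close> is the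
  image of the idempotent \<open>1 - t f\<^sup>i\<close>, hence projective, and \<open>Ker f \<noteq> 0\<close> since otherwise \<open>f\<close> would be
  an isomorphism. If \<open>Ker f = A \<oplus> B\<close> with \<open>A, B \<noteq> 0\<close>, then \<open>f\<close> factors through \<open>X/A\<close>; the quotient map
  kills \<open>A\<close>, so it is not a split monomorphism, and irreducibility yields a chain splitting \<open>s\<^sub>A\<close> of
  \<open>X/A \<rightarrow> Y\<close>, and likewise \<open>s\<^sub>B\<close>. The splitting \<open>s\<^sub>B\<close> produces a chain projection \<open>q\<close> of \<open>X\<close> onto
  \<open>A\<close>, and \<open>s\<^sub>A - q s\<^sub>A\<close> is a chain splitting of \<open>f\<close>: a contradiction.

  Dually, for \<open>f\<close> of type (sec) with degreewise retractions \<open>r\<close>, the cokernel is isomorphic to the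
  complement \<open>D = Ker r\<close> of \<open>Im f\<close> with the projected differential. If \<open>D = A \<oplus> B\<close> with \<open>A, B \<noteq> 0\<close>,
  then \<open>f\<close> factors through the subcomplexes \<open>Ker \<pi>\<^sub>A\<close> and \<open>Ker \<pi>\<^sub>B\<close> of \<open>Y\<close>, whose inclusions are not
  split epimorphisms; the resulting retractions of \<open>f\<close> into these subcomplexes glue to a retraction
  of \<open>f\<close> itself.\<close>

section \<open>Right modules\<close>

context abelian_group
begin

lemma minus_self [simp]: "x \<in> carrier G \<Longrightarrow> x \<ominus> x = \<zero>"
  by (simp add: a_minus_def r_neg)

lemma minus_zero_right [simp]: "x \<in> carrier G \<Longrightarrow> x \<ominus> \<zero> = x"
  by (simp add: a_minus_def)

lemma zero_minus [simp]: "x \<in> carrier G \<Longrightarrow> \<zero> \<ominus> x = \<ominus> x"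
  by (simp add: a_minus_def)

lemma add_minus_cancel [simp]: "x \<in> carrier G \<Longrightarrow> y \<in> carrier G \<Longrightarrow> (x \<oplus> y) \<ominus> y = x"
  by (simp add: a_minus_def a_assoc r_neg)

lemma minus_add_cancel [simp]: "x \<in> carrier G \<Longrightarrow> y \<in> carrier G \<Longrightarrow> (x \<ominus> y) \<oplus> y = x"
  by (simp add: a_minus_def a_assoc l_neg)

lemma add_minus_cancel_left [simp]: "x \<in> carrier G \<Longrightarrow> y \<in> carrier G \<Longrightarrow> (x \<oplus> y) \<ominus> x = y"
  by (metis add_minus_cancel a_comm)

lemma add_minus_cancel_inner [simp]: "x \<in> carrier G \<Longrightarrow> y \<in> carrier G \<Longrightarrow> x \<oplus> (y \<ominus> x) = y"
  by (metis minus_add_cancel a_comm minus_closed)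

lemma minus_eq_zero_iff: "x \<in> carrier G \<Longrightarrow> y \<in> carrier G \<Longrightarrow> x \<ominus> y = \<zero> \<longleftrightarrow> x = y"
  by (metis minus_add_cancel minus_self l_zero)

lemma add_minus_add: "a \<in> carrier G \<Longrightarrow> b \<in> carrier G \<Longrightarrow> c \<in> carrier G \<Longrightarrow> d \<in> carrier G \<Longrightarrow>
    (a \<oplus> b) \<ominus> (c \<oplus> d) = (a \<ominus> c) \<oplus> (b \<ominus> d)"
  by (simp add: a_minus_def minus_add a_ac)

lemma minus_minus_minus: "a \<in> carrier G \<Longrightarrow> b \<in> carrier G \<Longrightarrow> c \<in> carrier G \<Longrightarrow> d \<in> carrier G \<Longrightarrow>
    (a \<ominus> b) \<ominus> (c \<ominus> d) = (a \<ominus> c) \<ominus> (b \<ominus> d)"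
  by (simp add: a_minus_def minus_add a_ac minus_minus)

end

locale rmod =
  fixes L :: "('r, 'y) ring_scheme" and M :: "('a, 'r, 'z) rmodule_scheme" (structure)
  assumes right_module: "right_module L M"
begin

sublocale abelian_group M
  using right_module unfolding right_module_def by simp

lemma ring_scalars: "ring L"
  using right_module unfolding right_module_def by simp

lemma smult_closed [intro, simp]: "x \<in> carrier M \<Longrightarrow> a \<in> carrier L \<Longrightarrow> rsmult M x a \<in> carrier M"
  using right_module unfolding right_module_def by blast

lemma smult_add: "x \<in> carrier M \<Longrightarrow> y \<in> carrier M \<Longrightarrow> a \<in> carrier L \<Longrightarrow>
    rsmult M (x \<oplus> y) a = rsmult M x a \<oplus> rsmult M y a"
  using right_module unfolding right_module_def by blast

lemma smult_one [simp]: "x \<in> carrier M \<Longrightarrow> rsmult M x \<one>\<^bsub>L\<^esub> = x"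
  using right_module unfolding right_module_def by blast

lemma smult_zero [simp]:
  assumes "a \<in> carrier L"
  shows "rsmult M \<zero> a = \<zero>"
proof -
  have "rsmult M \<zero> a \<oplus> rsmult M \<zero> a = rsmult M \<zero> a"
    using smult_add[of \<zero> \<zero> a] assms by simp
  then show ?thesis
    using assms add.l_cancel_one smult_closed zero_closed by metis
qed

lemma smult_neg:
  assumes "x \<in> carrier M" "a \<in> carrier L"
  shows "rsmult M (\<ominus> x) a = \<ominus> rsmult M x a"
proof -
  have "rsmult M (\<ominus> x) a \<oplus> rsmult M x a = \<zero>"
    using smult_add[of "\<ominus> x" x a, symmetric] assms by (simp add: l_neg smult_zero)
  then show ?thesis
    using minus_equality assms by simp
qed

lemma smult_minus: "x \<in> carrier M \<Longrightarrow> y \<in> carrier M \<Longrightarrow> a \<in> carrier L \<Longrightarrow>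
    rsmult M (x \<ominus> y) a = rsmult M x a \<ominus> rsmult M y a"
  by (simp add: a_minus_def smult_add smult_neg)

end

lemma rmodI [intro]: "right_module L M \<Longrightarrow> rmod L M"
  by (rule rmod.intro)

lemma mod_homI:
  assumes "\<And>x. x \<in> carrier M \<Longrightarrow> f x \<in> carrier N"
    and "\<And>x. x \<notin> carrier M \<Longrightarrow> f x = undefined"
    and "\<And>x y. x \<in> carrier M \<Longrightarrow> y \<in> carrier M \<Longrightarrow> f (x \<oplus>\<^bsub>M\<^esub> y) = f x \<oplus>\<^bsub>N\<^esub> f y"
    and "\<And>x a. x \<in> carrier M \<Longrightarrow> a \<in> carrier L \<Longrightarrow> f (rsmult M x a) = rsmult N (f x) a"
  shows "f \<in> mod_hom L M N"
  using assms unfolding mod_hom_def extensional_def by auto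

lemma mod_hom_closed [intro]: "f \<in> mod_hom L M N \<Longrightarrow> x \<in> carrier M \<Longrightarrow> f x \<in> carrier N"
  unfolding mod_hom_def by auto

lemma mod_hom_add: "f \<in> mod_hom L M N \<Longrightarrow> x \<in> carrier M \<Longrightarrow> y \<in> carrier M \<Longrightarrow>
    f (x \<oplus>\<^bsub>M\<^esub> y) = f x \<oplus>\<^bsub>N\<^esub> f y"
  unfolding mod_hom_def by auto

lemma mod_hom_smult: "f \<in> mod_hom L M N \<Longrightarrow> x \<in> carrier M \<Longrightarrow> a \<in> carrier L \<Longrightarrow>
    f (rsmult M x a) = rsmult N (f x) a"
  unfolding mod_hom_def by auto

lemma mod_hom_undefined: "f \<in> mod_hom L M N \<Longrightarrow> x \<notin> carrier M \<Longrightarrow> f x = undefined"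
  unfolding mod_hom_def extensional_def by auto

lemma mod_hom_eqI:
  assumes "f \<in> mod_hom L M N" "g \<in> mod_hom L M N'" "\<And>x. x \<in> carrier M \<Longrightarrow> f x = g x"
  shows "f = g"
  using assms mod_hom_undefined by (metis ext)

locale mod_hom_pair = M: rmod L M + N: rmod L N
  for L :: "('r, 'y) ring_scheme"
    and M :: "('a, 'r, 'z) rmodule_scheme" and N :: "('b, 'r, 'w) rmodule_scheme"
begin

lemma hom_zero: "f \<in> mod_hom L M N \<Longrightarrow> f \<zero>\<^bsub>M\<^esub> = \<zero>\<^bsub>N\<^esub>"
  by (metis M.l_zero M.zero_closed N.add.l_cancel_one mod_hom_add mod_hom_closed)

lemma hom_neg:
  assumes f: "f \<in> mod_hom L M N" and x: "x \<in> carrier M"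
  shows "f (\<ominus>\<^bsub>M\<^esub> x) = \<ominus>\<^bsub>N\<^esub> f x"
proof -
  have "f (\<ominus>\<^bsub>M\<^esub> x) \<oplus>\<^bsub>N\<^esub> f x = \<zero>\<^bsub>N\<^esub>"
    using x by (simp add: mod_hom_add[OF f, symmetric] M.l_neg hom_zero[OF f])
  then show ?thesis
    using N.minus_equality f x by (simp add: mod_hom_closed)
qed

lemma hom_minus: "f \<in> mod_hom L M N \<Longrightarrow> x \<in> carrier M \<Longrightarrow> y \<in> carrier M \<Longrightarrow>
    f (x \<ominus>\<^bsub>M\<^esub> y) = f x \<ominus>\<^bsub>N\<^esub> f y"
  by (simp add: a_minus_def mod_hom_add hom_neg)

lemma hom_add_fun:
  assumes f: "f \<in> mod_hom L M N" and g: "g \<in> mod_hom L M N"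
  shows "(\<lambda>x\<in>carrier M. f x \<oplus>\<^bsub>N\<^esub> g x) \<in> mod_hom L M N"
proof (rule mod_homI, goal_cases)
  case (3 x y)
  have "f x \<in> carrier N" "f y \<in> carrier N" "g x \<in> carrier N" "g y \<in> carrier N"
    using 3 f g by auto
  then have "(f x \<oplus>\<^bsub>N\<^esub> f y) \<oplus>\<^bsub>N\<^esub> (g x \<oplus>\<^bsub>N\<^esub> g y) = (f x \<oplus>\<^bsub>N\<^esub> g x) \<oplus>\<^bsub>N\<^esub> (f y \<oplus>\<^bsub>N\<^esub> g y)"
    by (simp add: N.a_ac)
  then show ?case
    using 3 f g by (simp add: mod_hom_add)
qed (use f g in \<open>simp_all add: mod_hom_smult mod_hom_closed N.smult_add\<close>)

lemma hom_neg_fun: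
  assumes f: "f \<in> mod_hom L M N"
  shows "(\<lambda>x\<in>carrier M. \<ominus>\<^bsub>N\<^esub> f x) \<in> mod_hom L M N"
proof (rule mod_homI, goal_cases)
  case (3 x y)
  have "f x \<in> carrier N" "f y \<in> carrier N"
    using 3 f by auto
  then show ?case
    using 3 f by (simp add: mod_hom_add N.minus_add N.a_comm)
qed (use f in \<open>simp_all add: mod_hom_smult mod_hom_closed N.smult_neg\<close>)

lemma hom_minus_fun:
  assumes "f \<in> mod_hom L M N" "g \<in> mod_hom L M N"
  shows "(\<lambda>x\<in>carrier M. f x \<ominus>\<^bsub>N\<^esub> g x) \<in> mod_hom L M N"
proof -
  have "(\<lambda>x\<in>carrier M. f x \<ominus>\<^bsub>N\<^esub> g x) = (\<lambda>x\<in>carrier M. f x \<oplus>\<^bsub>N\<^esub> (\<lambda>x\<in>carrier M. \<ominus>\<^bsub>N\<^esub> g x) x)"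
    by (rule restrict_ext) (simp add: a_minus_def)
  then show ?thesis
    using hom_add_fun[OF assms(1) hom_neg_fun[OF assms(2)]] by simp
qed

end

lemma mod_hom_pairI [intro]: "right_module L M \<Longrightarrow> right_module L N \<Longrightarrow> mod_hom_pair L M N"
  by (simp add: mod_hom_pair_def rmodI)

lemma mod_hom_compose:
  assumes "rmod L M" "f \<in> mod_hom L M N" "g \<in> mod_hom L N P"
  shows "compose (carrier M) g f \<in> mod_hom L M P"
proof -
  interpret rmod L M by fact
  show ?thesis
    by (rule mod_homI) (use assms(2,3) in \<open>simp_all add: compose_def mod_hom_add mod_hom_smult mod_hom_closed\<close>)
qed

lemma (in rmod) mod_hom_id: "(\<lambda>x\<in>carrier M. x) \<in> mod_hom L M M"
  by (rule mod_homI) auto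

lemma submodule_subset: "submodule L S M \<Longrightarrow> S \<subseteq> carrier M"
  unfolding submodule_def by blast

lemma submodule_carrier: "submodule L S M \<Longrightarrow> x \<in> S \<Longrightarrow> x \<in> carrier M"
  unfolding submodule_def by blast

lemma submodule_zero: "submodule L S M \<Longrightarrow> \<zero>\<^bsub>M\<^esub> \<in> S"
  unfolding submodule_def by blast

lemma submodule_add: "submodule L S M \<Longrightarrow> x \<in> S \<Longrightarrow> y \<in> S \<Longrightarrow> x \<oplus>\<^bsub>M\<^esub> y \<in> S"
  unfolding submodule_def by blast

lemma submodule_neg: "submodule L S M \<Longrightarrow> x \<in> S \<Longrightarrow> \<ominus>\<^bsub>M\<^esub> x \<in> S"
  unfolding submodule_def by blast

lemma submodule_smult: "submodule L S M \<Longrightarrow> x \<in> S \<Longrightarrow> a \<in> carrier L \<Longrightarrow> rsmult M x a \<in> S"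
  unfolding submodule_def by blast

lemma submodule_minus: "submodule L S M \<Longrightarrow> x \<in> S \<Longrightarrow> y \<in> S \<Longrightarrow> x \<ominus>\<^bsub>M\<^esub> y \<in> S"
  by (simp add: a_minus_def submodule_add submodule_neg)

definition mod_ker :: "('a, 'r, 'z) rmodule_scheme \<Rightarrow> ('b, 'r, 'w) rmodule_scheme \<Rightarrow> ('a \<Rightarrow> 'b) \<Rightarrow> 'a set"
  where "mod_ker M N f = {x \<in> carrier M. f x = \<zero>\<^bsub>N\<^esub>}"

lemma mem_mod_ker [simp]: "x \<in> mod_ker M N f \<longleftrightarrow> x \<in> carrier M \<and> f x = \<zero>\<^bsub>N\<^esub>"
  by (simp add: mod_ker_def)

lemma (in mod_hom_pair) submodule_mod_ker: "f \<in> mod_hom L M N \<Longrightarrow> submodule L (mod_ker M N f) M"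
  unfolding submodule_def by (auto simp: hom_zero mod_hom_add hom_neg mod_hom_smult)

context rmod
begin

lemma right_module_restrict:
  assumes S: "submodule L S M"
  shows "right_module L (M\<lparr>carrier := S\<rparr>)"
proof -
  note S_sub = subsetD[OF submodule_subset[OF S]]
  have "abelian_group (M\<lparr>carrier := S\<rparr>)"
  proof (rule abelian_groupI, goal_cases)
    case (3 x y z)
    then show ?case by (simp add: a_assoc S_sub)
  next
    case (4 x y)
    then show ?case by (simp add: a_comm S_sub)
  next
    case (5 x)
    then show ?case by (simp add: S_sub)
  next
    case (6 x)
    then show ?case
      using S by (auto intro!: bexI[of _ "\<ominus> x"] simp: l_neg S_sub submodule_neg)
  qed (use S in \<open>simp_all add: submodule_zero submodule_add\<close>)
  then show ?thesis
    using right_module S unfolding right_module_def by (auto simp: S_sub submodule_smult)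
qed

lemma submodule_trans:
  assumes S: "submodule L S M" and T: "submodule L T (M\<lparr>carrier := S\<rparr>)"
  shows "submodule L T M"
proof -
  interpret S: abelian_group "M\<lparr>carrier := S\<rparr>"
    using right_module_restrict[OF S] unfolding right_module_def by simp
  have TS: "T \<subseteq> S"
    using submodule_subset[OF T] by simp
  have "\<ominus> x \<in> T" if x: "x \<in> T" for x
  proof -
    have xS: "x \<in> S" and xM: "x \<in> carrier M"
      using x TS submodule_carrier[OF S] by auto
    have "\<ominus> x \<oplus>\<^bsub>M\<lparr>carrier := S\<rparr>\<^esub> x = \<zero>\<^bsub>M\<lparr>carrier := S\<rparr>\<^esub>"
      using xM by (simp add: l_neg)
    then have "\<ominus>\<^bsub>M\<lparr>carrier := S\<rparr>\<^esub> x = \<ominus> x"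
      using S.minus_equality xS submodule_neg[OF S xS] by simp
    then show ?thesis
      using submodule_neg[OF T x] by simp
  qed
  then show ?thesis
    using S T TS unfolding submodule_def by auto
qed

end

lemma mod_hom_restrict:
  assumes f: "f \<in> mod_hom L M N" and S: "submodule L S M"
  shows "restrict f S \<in> mod_hom L (M\<lparr>carrier := S\<rparr>) N"
proof (rule mod_homI, goal_cases)
  case (1 x)
  then show ?case using f S by (simp add: mod_hom_closed submodule_carrier)
next
  case (3 x y)
  then show ?case using f S by (simp add: mod_hom_add submodule_carrier submodule_add)
next
  case (4 x a)
  then show ?case using f S by (simp add: mod_hom_smult submodule_carrier submodule_smult)
qed simp

lemma mod_hom_corestrict:
  assumes f: "f \<in> mod_hom L M N" and "\<And>x. x \<in> carrier M \<Longrightarrow> f x \<in> S"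
  shows "f \<in> mod_hom L M (N\<lparr>carrier := S\<rparr>)"
proof (rule mod_homI, goal_cases)
  case (2 x)
  then show ?case using f by (rule mod_hom_undefined[rotated])
qed (use assms in \<open>simp_all add: mod_hom_add mod_hom_smult\<close>)

lemma mod_hom_extend_codomain:
  assumes f: "f \<in> mod_hom L M (N\<lparr>carrier := S\<rparr>)" and "S \<subseteq> carrier N"
  shows "f \<in> mod_hom L M N"
proof (rule mod_homI, goal_cases)
  case (1 x)
  then show ?case using assms mod_hom_closed[OF f] by force
next
  case (2 x)
  then show ?case using f by (rule mod_hom_undefined[rotated])
qed (simp_all add: mod_hom_add[OF f] mod_hom_smult[OF f])

definition projection_onto :: "('r, 'y) ring_scheme \<Rightarrow> ('a, 'r, 'z) rmodule_scheme \<Rightarrow> 'a set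
    \<Rightarrow> ('a \<Rightarrow> 'a) \<Rightarrow> bool"
  where "projection_onto L M S e \<longleftrightarrow>
    e \<in> mod_hom L M M \<and> (\<forall>x\<in>carrier M. e x \<in> S) \<and> (\<forall>s\<in>S. e s = s)"

lemma projection_ontoD:
  assumes "projection_onto L M S e"
  shows "e \<in> mod_hom L M M" "x \<in> carrier M \<Longrightarrow> e x \<in> S" "s \<in> S \<Longrightarrow> e s = s"
  using assms unfolding projection_onto_def by blast+

definition complement_map :: "('a, 'r, 'z) rmodule_scheme \<Rightarrow> ('a \<Rightarrow> 'a) \<Rightarrow> 'a \<Rightarrow> 'a"
  where "complement_map M p = (\<lambda>x\<in>carrier M. x \<ominus>\<^bsub>M\<^esub> p x)"

context rmod
begin

lemma complement_map_hom: "p \<in> mod_hom L M M \<Longrightarrow> complement_map M p \<in> mod_hom L M M"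
proof -
  interpret mod_hom_pair L M M
    using right_module by blast
  assume "p \<in> mod_hom L M M"
  then have "(\<lambda>x\<in>carrier M. (\<lambda>x\<in>carrier M. x) x \<ominus> p x) \<in> mod_hom L M M"
    by (rule hom_minus_fun[OF mod_hom_id])
  then show ?thesis
    unfolding complement_map_def by (simp cong: restrict_cong)
qed

lemma complement_map_eq_zero_iff:
  assumes "p \<in> mod_hom L M M" "x \<in> carrier M"
  shows "complement_map M p x = \<zero> \<longleftrightarrow> p x = x"
  using assms minus_eq_zero_iff[of x "p x"] by (auto simp: complement_map_def mod_hom_closed)

lemma projection_onto_complement:
  assumes p: "p \<in> mod_hom L M M" and idem: "\<And>x. x \<in> carrier M \<Longrightarrow> p (p x) = p x"
  shows "projection_onto L M (mod_ker M M p) (complement_map M p)"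
  unfolding projection_onto_def
proof (intro conjI ballI)
  interpret mod_hom_pair L M M
    using right_module by blast
  show "complement_map M p \<in> mod_hom L M M"
    by (rule complement_map_hom[OF p])
  fix x assume x: "x \<in> carrier M"
  have px: "p x \<in> carrier M"
    using p x by (rule mod_hom_closed)
  have "p (x \<ominus> p x) = \<zero>"
    using x px idem by (simp add: hom_minus[OF p])
  then show "complement_map M p x \<in> mod_ker M M p"
    using x px by (simp add: complement_map_def)
next
  fix s assume "s \<in> mod_ker M M p"
  then show "complement_map M p s = s"
    by (simp add: complement_map_def)
qed

end

lemma (in mod_hom_pair) projection_onto_kernel:
  assumes u: "u \<in> mod_hom L M N" and v: "v \<in> mod_hom L N M"
    and uv: "\<And>y. y \<in> carrier N \<Longrightarrow> u (v y) = y"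
  shows "projection_onto L M (mod_ker M N u) (complement_map M (compose (carrier M) v u))"
    and "y \<in> carrier N \<Longrightarrow> complement_map M (compose (carrier M) v u) (v y) = \<zero>\<^bsub>M\<^esub>"
proof -
  interpret NM: mod_hom_pair L N M
    using M.right_module N.right_module by blast
  let ?p = "compose (carrier M) v u"
  have p: "?p \<in> mod_hom L M M"
    by (rule mod_hom_compose[OF _ u v]) unfold_locales
  have idem: "?p (?p x) = ?p x" if "x \<in> carrier M" for x
    using that u v uv by (simp add: compose_def mod_hom_closed)
  have "?p x = \<zero>\<^bsub>M\<^esub> \<longleftrightarrow> u x = \<zero>\<^bsub>N\<^esub>" if x: "x \<in> carrier M" for x
  proof
    assume "?p x = \<zero>\<^bsub>M\<^esub>"
    then have "u (v (u x)) = u \<zero>\<^bsub>M\<^esub>"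
      using x by (simp add: compose_def)
    then show "u x = \<zero>\<^bsub>N\<^esub>"
      using x uv u by (simp add: hom_zero mod_hom_closed)
  qed (use x v in \<open>simp add: compose_def NM.hom_zero\<close>)
  then have "mod_ker M M ?p = mod_ker M N u"
    by auto
  then show "projection_onto L M (mod_ker M N u) (complement_map M ?p)"
    using M.projection_onto_complement[OF p idem] by simp
  assume y: "y \<in> carrier N"
  then have vy: "v y \<in> carrier M"
    using v by (simp add: mod_hom_closed)
  have "?p (v y) = v y"
    using vy y uv by (simp add: compose_def)
  then show "complement_map M ?p (v y) = \<zero>\<^bsub>M\<^esub>"
    by (simp add: M.complement_map_eq_zero_iff[OF p vy])
qed

lemma right_module_free_mod:
  assumes L: "ring L"
  shows "right_module L (free_mod L m)"
proof -
  interpret ring L by (rule L)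
  have "abelian_group (free_mod L m)"
  proof (rule abelian_groupI, goal_cases)
    case (3 x y z)
    then show ?case
      by (intro ext) (auto simp: free_mod_def PiE_iff a_assoc)
  next
    case (4 x y)
    then show ?case
      by (intro ext) (auto simp: free_mod_def PiE_iff a_comm)
  next
    case (5 x)
    then show ?case
      by (intro ext) (auto simp: free_mod_def PiE_iff extensional_def)
  next
    case (6 x)
    then show ?case
      by (intro bexI[of _ "\<lambda>i\<in>{0..<m}. \<ominus>\<^bsub>L\<^esub> x i"] ext) (auto simp: free_mod_def PiE_iff l_neg)
  qed (auto simp: free_mod_def PiE_iff)
  then show ?thesis
    unfolding right_module_def
    by (auto intro!: ext simp: L free_mod_def PiE_iff l_distr r_distr m_assoc extensional_def)
qed
lemma fg_projective_projection:
  assumes fg: "fg_projective L M" and S: "submodule L S M" and e: "projection_onto L M S e"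
  shows "fg_projective L (M\<lparr>carrier := S\<rparr>)"
proof -
  interpret rmod L M
    using fg unfolding fg_projective_def by blast
  obtain m p s where p: "p \<in> mod_hom L (free_mod L m) M" and s: "s \<in> mod_hom L M (free_mod L m)"
    and ps: "\<forall>x\<in>carrier M. p (s x) = x"
    using fg unfolding fg_projective_def by blast
  let ?F = "free_mod L m"
  have F: "rmod L ?F"
    using right_module_free_mod[OF ring_scalars] by blast
  have "compose (carrier ?F) e p \<in> mod_hom L ?F M"
    by (rule mod_hom_compose[OF F p projection_ontoD(1)[OF e]])
  then have p': "compose (carrier ?F) e p \<in> mod_hom L ?F (M\<lparr>carrier := S\<rparr>)"
    by (rule mod_hom_corestrict) (simp add: compose_def projection_ontoD(2)[OF e] mod_hom_closed[OF p])
  have s': "restrict s S \<in> mod_hom L (M\<lparr>carrier := S\<rparr>) ?F"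
    by (rule mod_hom_restrict[OF s S])
  have "\<forall>x\<in>carrier (M\<lparr>carrier := S\<rparr>). compose (carrier ?F) e p (restrict s S x) = x"
    using ps projection_ontoD(3)[OF e] submodule_carrier[OF S] mod_hom_closed[OF s]
    by (simp add: compose_def)
  then show ?thesis
    unfolding fg_projective_def using right_module_restrict[OF S] p' s' by blast
qed

locale module_bij = M: rmod L M
  for L :: "('r, 'y) ring_scheme" and M :: "('a, 'r, 'z) rmodule_scheme" +
  fixes N :: "('b, 'r, 'w) rmodule_scheme" and \<phi> :: "'a \<Rightarrow> 'b"
  assumes bij: "bij_betw \<phi> (carrier M) (carrier N)"
    and add: "\<And>x y. x \<in> carrier M \<Longrightarrow> y \<in> carrier M \<Longrightarrow> \<phi> (x \<oplus>\<^bsub>M\<^esub> y) = \<phi> x \<oplus>\<^bsub>N\<^esub> \<phi> y"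
    and smult: "\<And>x a. x \<in> carrier M \<Longrightarrow> a \<in> carrier L \<Longrightarrow> \<phi> (rsmult M x a) = rsmult N (\<phi> x) a"
    and zero: "\<zero>\<^bsub>N\<^esub> = \<phi> \<zero>\<^bsub>M\<^esub>"
begin

definition \<psi> :: "'b \<Rightarrow> 'a"
  where "\<psi> = inv_into (carrier M) \<phi>"

lemma \<phi>_closed: "x \<in> carrier M \<Longrightarrow> \<phi> x \<in> carrier N"
  using bij bij_betwE by blast

lemma \<psi>_closed: "y \<in> carrier N \<Longrightarrow> \<psi> y \<in> carrier M"
  unfolding \<psi>_def by (metis bij bij_betw_def inv_into_into)

lemma \<phi>_\<psi>: "y \<in> carrier N \<Longrightarrow> \<phi> (\<psi> y) = y"
  unfolding \<psi>_def by (meson bij bij_betw_inv_into_right)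

lemma \<psi>_\<phi>: "x \<in> carrier M \<Longrightarrow> \<psi> (\<phi> x) = x"
  unfolding \<psi>_def by (meson bij bij_betw_inv_into_left)

lemma add_target: "u \<in> carrier N \<Longrightarrow> v \<in> carrier N \<Longrightarrow> u \<oplus>\<^bsub>N\<^esub> v = \<phi> (\<psi> u \<oplus>\<^bsub>M\<^esub> \<psi> v)"
  using add \<psi>_closed \<phi>_\<psi> by simp

lemma smult_target: "u \<in> carrier N \<Longrightarrow> a \<in> carrier L \<Longrightarrow> rsmult N u a = \<phi> (rsmult M (\<psi> u) a)"
  using smult \<psi>_closed \<phi>_\<psi> by simp

lemma \<psi>_add: "u \<in> carrier N \<Longrightarrow> v \<in> carrier N \<Longrightarrow> \<psi> (u \<oplus>\<^bsub>N\<^esub> v) = \<psi> u \<oplus>\<^bsub>M\<^esub> \<psi> v"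
  using add_target \<psi>_\<phi> \<psi>_closed by simp

lemma \<psi>_smult: "u \<in> carrier N \<Longrightarrow> a \<in> carrier L \<Longrightarrow> \<psi> (rsmult N u a) = rsmult M (\<psi> u) a"
  using smult_target \<psi>_\<phi> \<psi>_closed by simp

lemma target_abelian_group: "abelian_group N"
proof (rule abelian_groupI, goal_cases)
  case (1 x y)
  then show ?case using add_target \<psi>_closed \<phi>_closed by simp
next
  case 2
  show ?case using zero \<phi>_closed by simp
next
  case (3 x y z)
  then show ?case
    using add_target \<psi>_add \<psi>_closed \<phi>_closed by (simp add: M.a_assoc)
next
  case (4 x y)
  then show ?case by (simp add: add_target \<psi>_closed M.a_comm)
next
  case (5 x)
  then show ?case
    using add_target[of "\<zero>\<^bsub>N\<^esub>" x] \<psi>_\<phi> \<phi>_\<psi> \<psi>_closed zero \<phi>_closed by simp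
next
  case (6 x)
  show ?case
  proof (rule bexI[of _ "\<phi> (\<ominus>\<^bsub>M\<^esub> \<psi> x)"])
    show "\<phi> (\<ominus>\<^bsub>M\<^esub> \<psi> x) \<oplus>\<^bsub>N\<^esub> x = \<zero>\<^bsub>N\<^esub>"
      using 6 add_target[of "\<phi> (\<ominus>\<^bsub>M\<^esub> \<psi> x)" x] \<phi>_closed \<psi>_closed \<psi>_\<phi> zero by (simp add: M.l_neg)
  qed (use 6 \<phi>_closed \<psi>_closed in simp)
qed

lemma target_module: "right_module L N"
  unfolding right_module_def
proof (intro conjI ballI)
  fix x a b assume "x \<in> carrier N" "a \<in> carrier L" "b \<in> carrier L"
  then show "rsmult N x (a \<oplus>\<^bsub>L\<^esub> b) = rsmult N x a \<oplus>\<^bsub>N\<^esub> rsmult N x b"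
    and "rsmult N x (a \<otimes>\<^bsub>L\<^esub> b) = rsmult N (rsmult N x a) b"
    using M.right_module smult_target add_target \<psi>_closed \<phi>_closed \<psi>_\<phi> unfolding right_module_def
    by (simp_all add: ring.ring_simprules(1,5)[OF M.ring_scalars])
next
  fix x y a assume "x \<in> carrier N" "y \<in> carrier N" "a \<in> carrier L"
  then show "rsmult N (x \<oplus>\<^bsub>N\<^esub> y) a = rsmult N x a \<oplus>\<^bsub>N\<^esub> rsmult N y a"
    using smult_target add_target \<psi>_closed \<phi>_closed \<psi>_\<phi> M.smult_add by simp
qed (use M.ring_scalars target_abelian_group smult_target \<psi>_closed \<phi>_closed \<phi>_\<psi>
    ring.ring_simprules(6)[OF M.ring_scalars] in simp_all)

lemma \<phi>_hom: "restrict \<phi> (carrier M) \<in> mod_hom L M N"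
  by (rule mod_homI) (simp_all add: \<phi>_closed add smult)

lemma \<psi>_hom: "restrict \<psi> (carrier N) \<in> mod_hom L N M"
proof -
  interpret N: rmod L N by (rule rmodI[OF target_module])
  show ?thesis
    by (rule mod_homI) (simp_all add: \<psi>_closed \<psi>_add \<psi>_smult)
qed

lemma target_fg_projective:
  assumes fg: "fg_projective L M"
  shows "fg_projective L N"
proof -
  obtain m p s where p: "p \<in> mod_hom L (free_mod L m) M" and s: "s \<in> mod_hom L M (free_mod L m)"
    and ps: "\<forall>x\<in>carrier M. p (s x) = x"
    using fg unfolding fg_projective_def by blast
  let ?F = "free_mod L m"
  interpret N: rmod L N by (rule rmodI[OF target_module])
  have F: "rmod L ?F"
    using right_module_free_mod[OF M.ring_scalars] by blast
  have p': "compose (carrier ?F) (restrict \<phi> (carrier M)) p \<in> mod_hom L ?F N"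
    by (rule mod_hom_compose[OF F p \<phi>_hom])
  have s': "compose (carrier N) s (restrict \<psi> (carrier N)) \<in> mod_hom L N ?F"
    by (rule mod_hom_compose[OF N.rmod_axioms \<psi>_hom s])
  have "compose (carrier ?F) (restrict \<phi> (carrier M)) p (compose (carrier N) s (restrict \<psi> (carrier N)) y) = y"
    if y: "y \<in> carrier N" for y
    using y ps \<psi>_closed \<phi>_\<psi> mod_hom_closed[OF s \<psi>_closed[OF y]] by (simp add: compose_def)
  then show ?thesis
    unfolding fg_projective_def using target_module p' s' by blast
qed

end

locale decomposed_projection = rmod L M
  for L :: "('r, 'y) ring_scheme" and M :: "('a, 'r, 'z) rmodule_scheme" (structure) +
  fixes K A B :: "'a set" and e :: "'a \<Rightarrow> 'a"
  assumes projection: "projection_onto L M K e"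
    and first: "submodule L A M" and second: "submodule L B M"
    and first_subset: "A \<subseteq> K" and second_subset: "B \<subseteq> K"
    and disjoint: "A \<inter> B = {\<zero>}"
    and decompose: "\<And>k. k \<in> K \<Longrightarrow> \<exists>a\<in>A. \<exists>b\<in>B. k = a \<oplus> b"
begin

definition proj :: "'a \<Rightarrow> 'a"
  where "proj = (\<lambda>x\<in>carrier M. THE a. a \<in> A \<and> e x \<ominus> a \<in> B)"

lemma e_hom: "e \<in> mod_hom L M M"
  using projection by (rule projection_ontoD)

lemma first_carrier: "a \<in> A \<Longrightarrow> a \<in> carrier M"
  by (rule submodule_carrier[OF first])

lemma second_carrier: "b \<in> B \<Longrightarrow> b \<in> carrier M"
  by (rule submodule_carrier[OF second])

lemma proj_eqI:
  assumes x: "x \<in> carrier M" and a: "a \<in> A" "e x \<ominus> a \<in> B"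
  shows "proj x = a"
  unfolding proj_def restrict_apply' [OF x]
proof (rule the_equality)
  fix a' assume a': "a' \<in> A \<and> e x \<ominus> a' \<in> B"
  have ex: "e x \<in> carrier M"
    using e_hom x by (rule mod_hom_closed)
  have aM: "a \<in> carrier M" "a' \<in> carrier M"
    using a a' first_carrier by auto
  have "(e x \<ominus> a) \<ominus> (e x \<ominus> a') = \<ominus> (a \<ominus> a')"
    using ex aM by (subst minus_minus_minus) simp_all
  then have "\<ominus> (a \<ominus> a') \<in> B"
    using submodule_minus[OF second] a a' by metis
  then have "a \<ominus> a' \<in> B"
    using submodule_neg[OF second] aM by (metis minus_closed minus_minus)
  moreover have "a \<ominus> a' \<in> A"
    using submodule_minus[OF first] a a' by blast
  ultimately show "a' = a"
    using disjoint aM minus_eq_zero_iff by blast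
qed (use a in simp)

lemma proj_mem:
  assumes x: "x \<in> carrier M"
  shows "proj x \<in> A" "e x \<ominus> proj x \<in> B"
proof -
  obtain a b where ab: "a \<in> A" "b \<in> B" "e x = a \<oplus> b"
    using decompose projection_ontoD(2)[OF projection x] by blast
  then have "e x \<ominus> a = b"
    using first_carrier second_carrier by simp
  then have "proj x = a"
    using proj_eqI[OF x ab(1)] ab(2) by simp
  then show "proj x \<in> A" "e x \<ominus> proj x \<in> B"
    using ab \<open>e x \<ominus> a = b\<close> by simp_all
qed

lemma proj_carrier: "x \<in> carrier M \<Longrightarrow> proj x \<in> carrier M"
  using proj_mem(1) first_carrier by blast

lemma proj_first: "a \<in> A \<Longrightarrow> proj a = a"
  using first_carrier first_subset projection_ontoD(3)[OF projection]
  by (intro proj_eqI) (auto simp: submodule_zero[OF second])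

lemma proj_second: "b \<in> B \<Longrightarrow> proj b = \<zero>"
  using second_carrier second_subset projection_ontoD(3)[OF projection]
  by (intro proj_eqI) (auto simp: submodule_zero[OF first])

lemma proj_vanishes: "x \<in> carrier M \<Longrightarrow> e x = \<zero> \<Longrightarrow> proj x = \<zero>"
  by (intro proj_eqI) (auto simp: submodule_zero[OF first] submodule_zero[OF second])

lemma proj_retract:
  assumes x: "x \<in> carrier M"
  shows "proj (e x) = proj x"
proof -
  have ex: "e x \<in> carrier M"
    using e_hom x by (rule mod_hom_closed)
  have "e (e x) = e x"
    using projection_ontoD(2,3)[OF projection] x by blast
  then show ?thesis
    using proj_mem[OF x] by (intro proj_eqI[OF ex]) simp_all
qed

lemma proj_idem: "x \<in> carrier M \<Longrightarrow> proj (proj x) = proj x"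
  using proj_first proj_mem(1) by blast

lemma proj_hom: "proj \<in> mod_hom L M M"
proof (rule mod_homI)
  fix x y assume x: "x \<in> carrier M" and y: "y \<in> carrier M"
  have "e (x \<oplus> y) \<ominus> (proj x \<oplus> proj y) = (e x \<ominus> proj x) \<oplus> (e y \<ominus> proj y)"
    using x y e_hom proj_carrier by (simp add: mod_hom_add mod_hom_closed add_minus_add)
  then have "proj (x \<oplus> y) = proj x \<oplus> proj y"
    using x y proj_mem by (intro proj_eqI) (auto intro: submodule_add[OF first] submodule_add[OF second])
  then show "proj (x \<oplus> y) = proj x \<oplus> proj y" .
next
  fix x c assume x: "x \<in> carrier M" and c: "c \<in> carrier L"
  have "e (rsmult M x c) \<ominus> rsmult M (proj x) c = rsmult M (e x \<ominus> proj x) c"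
    using x c e_hom proj_carrier by (simp add: mod_hom_smult mod_hom_closed smult_minus)
  then show "proj (rsmult M x c) = rsmult M (proj x) c"
    using x c proj_mem by (intro proj_eqI) (auto intro: submodule_smult[OF first] submodule_smult[OF second])
next
  show "x \<in> carrier M \<Longrightarrow> proj x \<in> carrier M" for x
    by (rule proj_carrier)
  show "x \<notin> carrier M \<Longrightarrow> proj x = undefined" for x
    by (simp add: proj_def)
qed

lemma swap: "decomposed_projection L M K B A e"
proof unfold_locales
  fix k assume "k \<in> K"
  then obtain a b where "a \<in> A" "b \<in> B" "k = a \<oplus> b"
    using decompose by blast
  then show "\<exists>b\<in>B. \<exists>a\<in>A. k = b \<oplus> a"
    using first_carrier second_carrier a_comm by metis
qed (use projection first second first_subset second_subset disjoint in auto)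

end
section \<open>Complexes and chain maps\<close>

lemma complex_module: "is_complex L X \<Longrightarrow> right_module L (obj X i)"
  unfolding is_complex_def by blast

lemma complex_rmod: "is_complex L X \<Longrightarrow> rmod L (obj X i)"
  by (simp add: complex_module rmodI)

lemma complex_diff_hom: "is_complex L X \<Longrightarrow> diff X i \<in> mod_hom L (obj X i) (obj X (i + 1))"
  unfolding is_complex_def by blast

lemma complex_diff_closed: "is_complex L X \<Longrightarrow> x \<in> carrier (obj X i) \<Longrightarrow> diff X i x \<in> carrier (obj X (i + 1))"
  using complex_diff_hom mod_hom_closed by blast

lemma complex_diff_diff: "is_complex L X \<Longrightarrow> x \<in> carrier (obj X i) \<Longrightarrow>
    diff X (i + 1) (diff X i x) = \<zero>\<^bsub>obj X (i + 2)\<^esub>"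
  unfolding is_complex_def by blast

lemma in_Cn_complex: "in_Cn L n X \<Longrightarrow> is_complex L X"
  unfolding in_Cn_def by blast

lemma in_Cn_fg_projective: "in_Cn L n X \<Longrightarrow> fg_projective L (obj X i)"
  unfolding in_Cn_def by blast

lemma in_Cn_zero_mod: "in_Cn L n X \<Longrightarrow> i < 1 \<or> int n < i \<Longrightarrow> zero_mod (obj X i)"
  unfolding in_Cn_def by blast

lemma chain_map_hom: "chain_map L X Y f \<Longrightarrow> f i \<in> mod_hom L (obj X i) (obj Y i)"
  unfolding chain_map_def by blast

lemma chain_map_closed: "chain_map L X Y f \<Longrightarrow> x \<in> carrier (obj X i) \<Longrightarrow> f i x \<in> carrier (obj Y i)"
  using chain_map_hom mod_hom_closed by blast

lemma chain_map_diff: "chain_map L X Y f \<Longrightarrow> x \<in> carrier (obj X i) \<Longrightarrow>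
    f (i + 1) (diff X i x) = diff Y i (f i x)"
  unfolding chain_map_def by blast

lemma cmp_apply [simp]: "x \<in> carrier (obj X i) \<Longrightarrow> cmp X g h i x = g i (h i x)"
  unfolding cmp_def by simp

lemma cid_apply [simp]: "x \<in> carrier (obj X i) \<Longrightarrow> cid X i x = x"
  unfolding cid_def by simp

lemma chain_map_cmp:
  assumes X: "is_complex L X" and f: "chain_map L X Y f" and g: "chain_map L Y Z g"
  shows "chain_map L X Z (cmp X g f)"
  unfolding chain_map_def
proof (intro allI conjI ballI)
  fix i
  show "cmp X g f i \<in> mod_hom L (obj X i) (obj Z i)"
    using mod_hom_compose[OF complex_rmod[OF X] chain_map_hom[OF f] chain_map_hom[OF g]]
    by (simp add: cmp_def compose_def)
  fix x assume "x \<in> carrier (obj X i)"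
  then show "cmp X g f (i + 1) (diff X i x) = diff Z i (cmp X g f i x)"
    using X f g by (simp add: complex_diff_closed chain_map_closed chain_map_diff)
qed

lemma cmp_eq_cid_iff:
  assumes "chain_map L X X h"
  shows "h = cid X \<longleftrightarrow> (\<forall>i. \<forall>x\<in>carrier (obj X i). h i x = x)"
proof
  assume "\<forall>i. \<forall>x\<in>carrier (obj X i). h i x = x"
  then show "h = cid X"
    using mod_hom_undefined[OF chain_map_hom[OF assms]]
    by (intro ext) (metis cid_apply cid_def restrict_apply)
qed simp

lemma is_sectionI:
  assumes X: "is_complex L X" and f: "chain_map L X Y f" and r: "chain_map L Y X r"
    and rf: "\<And>i x. x \<in> carrier (obj X i) \<Longrightarrow> r i (f i x) = x"
  shows "is_section L X Y f"
proof -
  have "cmp X r f = cid X"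
    using rf by (simp add: cmp_eq_cid_iff[OF chain_map_cmp[OF X f r]])
  then show ?thesis
    unfolding is_section_def using f r by blast
qed

lemma is_retractionI:
  assumes Y: "is_complex L Y" and f: "chain_map L X Y f" and s: "chain_map L Y X s"
    and fs: "\<And>i y. y \<in> carrier (obj Y i) \<Longrightarrow> f i (s i y) = y"
  shows "is_retraction L X Y f"
proof -
  have "cmp Y f s = cid Y"
    using fs by (simp add: cmp_eq_cid_iff[OF chain_map_cmp[OF Y s f]])
  then show ?thesis
    unfolding is_retraction_def using f s by blast
qed

lemma is_sectionE:
  assumes "is_section L X Y f"
  obtains r where "chain_map L Y X r" "\<And>i x. x \<in> carrier (obj X i) \<Longrightarrow> r i (f i x) = x"
proof -
  obtain r where r: "chain_map L Y X r" and rf: "cmp X r f = cid X"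
    using assms unfolding is_section_def by blast
  have "r i (f i x) = x" if "x \<in> carrier (obj X i)" for i x
    using rf that by (metis cid_apply cmp_apply)
  then show ?thesis
    using r that by blast
qed

lemma is_retractionE:
  assumes "is_retraction L X Y f"
  obtains s where "chain_map L Y X s" "\<And>i y. y \<in> carrier (obj Y i) \<Longrightarrow> f i (s i y) = y"
proof -
  obtain s where s: "chain_map L Y X s" and fs: "cmp Y f s = cid Y"
    using assms unfolding is_retraction_def by blast
  have "f i (s i y) = y" if "y \<in> carrier (obj Y i)" for i y
    using fs that by (metis cid_apply cmp_apply)
  then show ?thesis
    using s that by blast
qed

lemma chain_map_eqI:
  assumes "chain_map L X Y f" "chain_map L X Y' g" "\<And>i x. x \<in> carrier (obj X i) \<Longrightarrow> f i x = g i x"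
  shows "f = g"
proof
  show "f i = g i" for i
    by (rule mod_hom_eqI[OF chain_map_hom[OF assms(1)] chain_map_hom[OF assms(2)] assms(3)])
qed

definition subcomplex :: "('a, 'r) cplx \<Rightarrow> (int \<Rightarrow> 'a set) \<Rightarrow> ('a, 'r) cplx"
  where "subcomplex X S =
    \<lparr>obj = (\<lambda>i. (obj X i)\<lparr>carrier := S i\<rparr>), diff = (\<lambda>i. restrict (diff X i) (S i))\<rparr>"

text \<open>For a degreewise projection \<open>e\<close> onto \<open>S\<close> compatible with the differential,
  \<open>projected_cplx X S e\<close> realises the quotient of \<open>X\<close> by the kernel of \<open>e\<close> on the image \<open>S\<close>.\<close>
definition projected_cplx :: "('a, 'r) cplx \<Rightarrow> (int \<Rightarrow> 'a set) \<Rightarrow> (int \<Rightarrow> 'a \<Rightarrow> 'a) \<Rightarrow> ('a, 'r) cplx"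
  where "projected_cplx X S e =
    \<lparr>obj = (\<lambda>i. (obj X i)\<lparr>carrier := S i\<rparr>), diff = (\<lambda>i. \<lambda>x\<in>S i. e (i + 1) (diff X i x))\<rparr>"

lemma subcomplex_obj [simp]: "obj (subcomplex X S) i = (obj X i)\<lparr>carrier := S i\<rparr>"
  by (simp add: subcomplex_def)

lemma subcomplex_diff [simp]: "diff (subcomplex X S) i = restrict (diff X i) (S i)"
  by (simp add: subcomplex_def)

lemma projected_cplx_obj [simp]: "obj (projected_cplx X S e) i = (obj X i)\<lparr>carrier := S i\<rparr>"
  by (simp add: projected_cplx_def)

lemma projected_cplx_diff [simp]: "diff (projected_cplx X S e) i = (\<lambda>x\<in>S i. e (i + 1) (diff X i x))"
  by (simp add: projected_cplx_def)

lemma ker_cplx_eq_subcomplex: "ker_cplx X Y f = subcomplex X (\<lambda>i. mod_ker (obj X i) (obj Y i) (f i))"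
  by (simp add: ker_cplx_def subcomplex_def mod_ker_def)

lemma subcomplex_complex:
  assumes X: "is_complex L X" and S: "\<And>i. submodule L (S i) (obj X i)"
    and closed: "\<And>i. diff X i ` S i \<subseteq> S (i + 1)"
  shows "is_complex L (subcomplex X S)"
  unfolding is_complex_def
proof (intro allI conjI ballI)
  fix i
  show "right_module L (obj (subcomplex X S) i)"
    using rmod.right_module_restrict[OF complex_rmod[OF X] S] by simp
  have "restrict (diff X i) (S i) \<in> mod_hom L ((obj X i)\<lparr>carrier := S i\<rparr>) (obj X (i + 1))"
    by (rule mod_hom_restrict[OF complex_diff_hom[OF X] S])
  then show "diff (subcomplex X S) i \<in> mod_hom L (obj (subcomplex X S) i) (obj (subcomplex X S) (i + 1))"
    by (simp, rule mod_hom_corestrict) (use closed in auto)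
  fix x assume "x \<in> carrier (obj (subcomplex X S) i)"
  then show "diff (subcomplex X S) (i + 1) (diff (subcomplex X S) i x) = \<zero>\<^bsub>obj (subcomplex X S) (i + 2)\<^esub>"
    using closed complex_diff_diff[OF X submodule_carrier[OF S]] by auto
qed

lemma subcomplex_inclusion:
  assumes X: "is_complex L X" and S: "\<And>i. submodule L (S i) (obj X i)"
    and closed: "\<And>i. diff X i ` S i \<subseteq> S (i + 1)"
  shows "chain_map L (subcomplex X S) X (\<lambda>i. \<lambda>x\<in>S i. x)"
  unfolding chain_map_def
proof (intro allI conjI ballI)
  fix i
  show "(\<lambda>x\<in>S i. x) \<in> mod_hom L (obj (subcomplex X S) i) (obj X i)"
    using mod_hom_restrict[OF rmod.mod_hom_id[OF complex_rmod[OF X]] S]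
    by (simp add: submodule_carrier[OF S] cong: restrict_cong)
  show "x \<in> carrier (obj (subcomplex X S) i) \<Longrightarrow>
      (\<lambda>x\<in>S (i + 1). x) (diff (subcomplex X S) i x) = diff X i ((\<lambda>x\<in>S i. x) x)" for x
    using closed by auto
qed

lemma chain_map_into_subcomplex:
  assumes g: "chain_map L Z X g" and into: "\<And>i z. z \<in> carrier (obj Z i) \<Longrightarrow> g i z \<in> S i"
  shows "chain_map L Z (subcomplex X S) g"
  unfolding chain_map_def
proof (intro allI conjI ballI)
  fix i
  show "g i \<in> mod_hom L (obj Z i) (obj (subcomplex X S) i)"
    using mod_hom_corestrict[OF chain_map_hom[OF g] into] by simp
  show "z \<in> carrier (obj Z i) \<Longrightarrow> g (i + 1) (diff Z i z) = diff (subcomplex X S) i (g i z)" for z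
    using into chain_map_diff[OF g] by simp
qed

lemma projected_cplx_complex:
  assumes X: "is_complex L X" and S: "\<And>i. submodule L (S i) (obj X i)"
    and e: "\<And>i. projection_onto L (obj X i) (S i) (e i)"
    and compat: "\<And>i x. x \<in> carrier (obj X i) \<Longrightarrow> e (i + 1) (diff X i (e i x)) = e (i + 1) (diff X i x)"
  shows "is_complex L (projected_cplx X S e)"
  unfolding is_complex_def
proof (intro allI conjI ballI)
  fix i
  let ?Z = "projected_cplx X S e"
  note e_hom = projection_ontoD(1)[OF e] and e_into = projection_ontoD(2)[OF e]
  show Zi: "right_module L (obj ?Z i)"
    using rmod.right_module_restrict[OF complex_rmod[OF X] S] by simp
  have "diff ?Z i = compose (carrier (obj ?Z i)) (e (i + 1)) (restrict (diff X i) (S i))"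
    by (simp add: compose_def fun_eq_iff)
  then have "diff ?Z i \<in> mod_hom L (obj ?Z i) (obj X (i + 1))"
    using mod_hom_compose[OF rmodI[OF Zi] _ e_hom] mod_hom_restrict[OF complex_diff_hom[OF X] S] by simp
  moreover have "diff ?Z i z \<in> S (i + 1)" if "z \<in> carrier (obj ?Z i)" for z
    using that e_into[OF complex_diff_closed[OF X submodule_carrier[OF S]]] by simp
  ultimately have "diff ?Z i \<in> mod_hom L (obj ?Z i) ((obj X (i + 1))\<lparr>carrier := S (i + 1)\<rparr>)"
    by (rule mod_hom_corestrict)
  then show "diff ?Z i \<in> mod_hom L (obj ?Z i) (obj ?Z (i + 1))"
    by (simp only: projected_cplx_obj)
  fix x assume "x \<in> carrier (obj ?Z i)"
  then have x: "x \<in> S i" and xX: "x \<in> carrier (obj X i)"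
    using submodule_carrier[OF S] by auto
  have dx: "diff X i x \<in> carrier (obj X (i + 1))"
    using X xX by (rule complex_diff_closed)
  have "diff ?Z (i + 1) (diff ?Z i x) = e (i + 2) (diff X (i + 1) (e (i + 1) (diff X i x)))"
    using x e_into[OF dx] by (simp add: add.assoc)
  also have "\<dots> = e (i + 2) (diff X (i + 1) (diff X i x))"
    using compat[OF dx] by (simp add: add.assoc)
  also have "\<dots> = \<zero>\<^bsub>obj X (i + 2)\<^esub>"
    using complex_diff_diff[OF X xX] mod_hom_pair.hom_zero[OF _ e_hom] complex_module[OF X] by auto
  finally show "diff ?Z (i + 1) (diff ?Z i x) = \<zero>\<^bsub>obj ?Z (i + 2)\<^esub>"
    by simp
qed

lemma projected_cplx_chain_map:
  assumes X: "is_complex L X" and e: "\<And>i. projection_onto L (obj X i) (S i) (e i)"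
    and compat: "\<And>i x. x \<in> carrier (obj X i) \<Longrightarrow> e (i + 1) (diff X i (e i x)) = e (i + 1) (diff X i x)"
  shows "chain_map L X (projected_cplx X S e) e"
  unfolding chain_map_def
proof (intro allI conjI ballI)
  fix i
  show "e i \<in> mod_hom L (obj X i) (obj (projected_cplx X S e) i)"
    using mod_hom_corestrict[OF projection_ontoD(1,2)[OF e]] by simp
  show "x \<in> carrier (obj X i) \<Longrightarrow> e (i + 1) (diff X i x) = diff (projected_cplx X S e) i (e i x)" for x
    using compat projection_ontoD(2)[OF e] by simp
qed

lemma in_Cn_restrict:
  assumes X: "in_Cn L n X" and Z: "is_complex L Z" and obj: "\<And>i. obj Z i = (obj X i)\<lparr>carrier := S i\<rparr>"
    and S: "\<And>i. submodule L (S i) (obj X i)" and e: "\<And>i. projection_onto L (obj X i) (S i) (e i)"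
  shows "in_Cn L n Z"
  unfolding in_Cn_def
proof (intro conjI allI impI)
  show "fg_projective L (obj Z i)" for i
    using fg_projective_projection[OF in_Cn_fg_projective[OF X] S e] by (simp add: obj)
  fix i :: int assume "i < 1 \<or> int n < i"
  then have "carrier (obj X i) = {\<zero>\<^bsub>obj X i\<^esub>}"
    using in_Cn_zero_mod[OF X] unfolding zero_mod_def by blast
  then show "zero_mod (obj Z i)"
    using submodule_subset[OF S] submodule_zero[OF S] unfolding zero_mod_def obj by auto
qed (rule Z)

definition is_decomposition :: "('r, 'y) ring_scheme \<Rightarrow> ('a, 'r) cplx \<Rightarrow> (int \<Rightarrow> 'a set) \<Rightarrow> (int \<Rightarrow> 'a set) \<Rightarrow> bool"
  where "is_decomposition L X A B \<longleftrightarrow>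
    (\<forall>i. submodule L (A i) (obj X i) \<and> submodule L (B i) (obj X i) \<and>
         diff X i ` A i \<subseteq> A (i + 1) \<and> diff X i ` B i \<subseteq> B (i + 1) \<and>
         A i \<inter> B i = {\<zero>\<^bsub>obj X i\<^esub>} \<and>
         carrier (obj X i) = {a \<oplus>\<^bsub>obj X i\<^esub> b | a b. a \<in> A i \<and> b \<in> B i})"

lemma indecomposable_iff:
  "indecomposable L X \<longleftrightarrow> is_complex L X \<and> \<not> (\<forall>i. zero_mod (obj X i)) \<and>
    (\<forall>A B. is_decomposition L X A B \<longrightarrow> (\<forall>i. A i = {\<zero>\<^bsub>obj X i\<^esub>}) \<or> (\<forall>i. B i = {\<zero>\<^bsub>obj X i\<^esub>}))"
  unfolding indecomposable_def is_decomposition_def by blast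

lemma is_decompositionD:
  assumes "is_decomposition L X A B"
  shows "submodule L (A i) (obj X i)" "submodule L (B i) (obj X i)"
    "diff X i ` A i \<subseteq> A (i + 1)" "diff X i ` B i \<subseteq> B (i + 1)"
    "A i \<inter> B i = {\<zero>\<^bsub>obj X i\<^esub>}"
    "carrier (obj X i) = {a \<oplus>\<^bsub>obj X i\<^esub> b | a b. a \<in> A i \<and> b \<in> B i}"
  using assms unfolding is_decomposition_def by blast+

lemma is_decomposition_swap:
  assumes X: "is_complex L X" and D: "is_decomposition L X A B"
  shows "is_decomposition L X B A"
  unfolding is_decomposition_def
proof (intro allI conjI)
  fix i
  note Di = is_decompositionD[OF D, of i]
  interpret rmod L "obj X i" by (rule complex_rmod[OF X])
  show "submodule L (B i) (obj X i)" "submodule L (A i) (obj X i)"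
    "diff X i ` B i \<subseteq> B (i + 1)" "diff X i ` A i \<subseteq> A (i + 1)"
    using Di(2,1,4,3) .
  show "B i \<inter> A i = {\<zero>\<^bsub>obj X i\<^esub>}"
    using Di(5) by blast
  have comm: "a \<oplus>\<^bsub>obj X i\<^esub> b = b \<oplus>\<^bsub>obj X i\<^esub> a" if "a \<in> A i" "b \<in> B i" for a b
    using that submodule_carrier[OF Di(1)] submodule_carrier[OF Di(2)] by (simp add: a_comm)
  show "carrier (obj X i) = {b \<oplus>\<^bsub>obj X i\<^esub> a | b a. b \<in> B i \<and> a \<in> A i}"
    unfolding Di(6)
  proof (intro equalityI subsetI)
    fix x assume "x \<in> {a \<oplus>\<^bsub>obj X i\<^esub> b | a b. a \<in> A i \<and> b \<in> B i}"
    then obtain a b where ab: "a \<in> A i" "b \<in> B i" and "x = a \<oplus>\<^bsub>obj X i\<^esub> b"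
      by blast
    then have "x = b \<oplus>\<^bsub>obj X i\<^esub> a"
      using comm[OF ab] by simp
    then show "x \<in> {b \<oplus>\<^bsub>obj X i\<^esub> a | b a. b \<in> B i \<and> a \<in> A i}"
      using ab by blast
  next
    fix x assume "x \<in> {b \<oplus>\<^bsub>obj X i\<^esub> a | b a. b \<in> B i \<and> a \<in> A i}"
    then obtain a b where ab: "a \<in> A i" "b \<in> B i" and "x = b \<oplus>\<^bsub>obj X i\<^esub> a"
      by blast
    then have "x = a \<oplus>\<^bsub>obj X i\<^esub> b"
      using comm[OF ab] by simp
    then show "x \<in> {a \<oplus>\<^bsub>obj X i\<^esub> b | a b. a \<in> A i \<and> b \<in> B i}"
      using ab by blast
  qed
qed

locale cplx_transfer =
  fixes L :: "('r, 'y) ring_scheme" and X :: "('a, 'r) cplx" and Y :: "('b, 'r) cplx"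
    and \<phi> :: "int \<Rightarrow> 'a \<Rightarrow> 'b"
  assumes source_complex: "is_complex L X"
    and bij: "\<And>i. bij_betw (\<phi> i) (carrier (obj X i)) (carrier (obj Y i))"
    and \<phi>_add: "\<And>i x y. x \<in> carrier (obj X i) \<Longrightarrow> y \<in> carrier (obj X i) \<Longrightarrow>
          \<phi> i (x \<oplus>\<^bsub>obj X i\<^esub> y) = \<phi> i x \<oplus>\<^bsub>obj Y i\<^esub> \<phi> i y"
    and \<phi>_smult: "\<And>i x a. x \<in> carrier (obj X i) \<Longrightarrow> a \<in> carrier L \<Longrightarrow>
          \<phi> i (rsmult (obj X i) x a) = rsmult (obj Y i) (\<phi> i x) a"
    and \<phi>_zero: "\<And>i. \<zero>\<^bsub>obj Y i\<^esub> = \<phi> i \<zero>\<^bsub>obj X i\<^esub>"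
    and \<phi>_diff: "\<And>i x. x \<in> carrier (obj X i) \<Longrightarrow> \<phi> (i + 1) (diff X i x) = diff Y i (\<phi> i x)"
    and target_diff_extensional: "\<And>i. diff Y i \<in> extensional (carrier (obj Y i))"
begin

lemma source_module: "right_module L (obj X i)"
  using source_complex by (rule complex_module)

lemma source_rmod: "rmod L (obj X i)"
  using source_module by (rule rmodI)

lemma degree_bij: "module_bij L (obj X i) (obj Y i) (\<phi> i)"
  by (rule module_bij.intro[OF source_rmod]) (unfold_locales, use bij \<phi>_add \<phi>_smult \<phi>_zero in auto)

abbreviation \<psi> :: "int \<Rightarrow> 'b \<Rightarrow> 'a"
  where "\<psi> i \<equiv> module_bij.\<psi> (obj X i) (\<phi> i)"

lemmas \<phi>_closed = module_bij.\<phi>_closed[OF degree_bij]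
lemmas \<psi>_closed = module_bij.\<psi>_closed[OF degree_bij]
lemmas \<phi>\<psi> = module_bij.\<phi>_\<psi>[OF degree_bij]

lemma \<phi>_inj: "x \<in> carrier (obj X i) \<Longrightarrow> x' \<in> carrier (obj X i) \<Longrightarrow> \<phi> i x = \<phi> i x' \<Longrightarrow> x = x'"
  using module_bij.\<psi>_\<phi>[OF degree_bij] by metis

lemma target_module: "right_module L (obj Y i)"
  by (rule module_bij.target_module[OF degree_bij])

lemma target_fg_projective: "fg_projective L (obj X i) \<Longrightarrow> fg_projective L (obj Y i)"
  by (rule module_bij.target_fg_projective[OF degree_bij])

lemmas \<phi>_hom = module_bij.\<phi>_hom[OF degree_bij]
lemmas \<psi>_hom = module_bij.\<psi>_hom[OF degree_bij]

lemma transfer_chain_map: "chain_map L X Y (\<lambda>i. restrict (\<phi> i) (carrier (obj X i)))"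
  unfolding chain_map_def
  by (auto simp: \<phi>_hom \<phi>_diff complex_diff_closed[OF source_complex])

lemma target_diff_eq: "diff Y i = compose (carrier (obj Y i)) (restrict (\<phi> (i + 1)) (carrier (obj X (i + 1))))
    (compose (carrier (obj Y i)) (diff X i) (restrict (\<psi> i) (carrier (obj Y i))))"
  using target_diff_extensional[of i]
  by (intro ext) (auto simp: compose_def \<phi>_diff \<psi>_closed \<phi>\<psi> complex_diff_closed[OF source_complex]
      extensional_def)

lemma target_complex: "is_complex L Y"
  unfolding is_complex_def
proof (intro allI conjI ballI)
  fix i
  show "right_module L (obj Y i)"
    by (rule target_module)
  show "diff Y i \<in> mod_hom L (obj Y i) (obj Y (i + 1))"
    unfolding target_diff_eq
    by (intro mod_hom_compose[OF rmodI[OF target_module] _ \<phi>_hom]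
        mod_hom_compose[OF rmodI[OF target_module] \<psi>_hom complex_diff_hom[OF source_complex]])
  fix y assume y: "y \<in> carrier (obj Y i)"
  have dx: "diff X i (\<psi> i y) \<in> carrier (obj X (i + 1))"
    using complex_diff_closed[OF source_complex \<psi>_closed[OF y]] .
  have "diff Y (i + 1) (diff Y i y) = \<phi> (i + 1 + 1) (diff X (i + 1) (diff X i (\<psi> i y)))"
    using y dx \<phi>_diff[OF dx] by (simp add: \<phi>_diff \<psi>_closed \<phi>\<psi>)
  also have "\<dots> = \<zero>\<^bsub>obj Y (i + 2)\<^esub>"
    using complex_diff_diff[OF source_complex \<psi>_closed[OF y]] by (simp add: \<phi>_zero add.assoc)
  finally show "diff Y (i + 1) (diff Y i y) = \<zero>\<^bsub>obj Y (i + 2)\<^esub>" .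
qed

lemma target_zero_mod:
  assumes "zero_mod (obj X i)"
  shows "zero_mod (obj Y i)"
proof -
  have "carrier (obj Y i) = \<phi> i ` carrier (obj X i)"
    using bij[of i] by (simp add: bij_betw_def)
  then show ?thesis
    using assms \<phi>_zero unfolding zero_mod_def by simp
qed

lemma source_zero_mod:
  assumes zero: "zero_mod (obj Y i)"
  shows "zero_mod (obj X i)"
proof -
  interpret Xi: rmod L "obj X i" by (rule source_rmod)
  have "x = \<zero>\<^bsub>obj X i\<^esub>" if x: "x \<in> carrier (obj X i)" for x
    using \<phi>_closed[OF x] zero \<phi>_zero \<phi>_inj[OF x Xi.zero_closed] unfolding zero_mod_def by simp
  then show ?thesis
    unfolding zero_mod_def using Xi.zero_closed by blast
qed

lemma target_in_Cn: "in_Cn L n X \<Longrightarrow> in_Cn L n Y"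
  unfolding in_Cn_def using target_complex target_fg_projective target_zero_mod by blast

abbreviation pullback :: "int \<Rightarrow> 'b set \<Rightarrow> 'a set"
  where "pullback i S \<equiv> {x\<in>carrier (obj X i). \<phi> i x \<in> S}"

lemma \<phi>_neg:
  assumes x: "x \<in> carrier (obj X i)"
  shows "\<phi> i (\<ominus>\<^bsub>obj X i\<^esub> x) = \<ominus>\<^bsub>obj Y i\<^esub> \<phi> i x"
proof -
  interpret mod_hom_pair L "obj X i" "obj Y i"
    using source_module target_module by blast
  have "restrict (\<phi> i) (carrier (obj X i)) (\<ominus>\<^bsub>obj X i\<^esub> x) = \<ominus>\<^bsub>obj Y i\<^esub> restrict (\<phi> i) (carrier (obj X i)) x"
    by (rule hom_neg[OF \<phi>_hom x])
  then show ?thesis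
    using x by simp
qed

lemma submodule_pullback:
  assumes S: "submodule L S (obj Y i)"
  shows "submodule L (pullback i S) (obj X i)"
proof -
  have S': "\<zero>\<^bsub>obj Y i\<^esub> \<in> S" "\<And>x y. x \<in> S \<Longrightarrow> y \<in> S \<Longrightarrow> x \<oplus>\<^bsub>obj Y i\<^esub> y \<in> S"
    "\<And>x. x \<in> S \<Longrightarrow> \<ominus>\<^bsub>obj Y i\<^esub> x \<in> S" "\<And>x a. x \<in> S \<Longrightarrow> a \<in> carrier L \<Longrightarrow> rsmult (obj Y i) x a \<in> S"
    using S unfolding submodule_def by blast+
  interpret rmod L "obj X i" by (rule rmod.intro[OF source_module])
  show ?thesis unfolding submodule_def
    using S' by (auto simp: \<phi>_zero[symmetric] \<phi>_add \<phi>_smult \<phi>_neg)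
qed

lemma pullback_zero:
  assumes S: "submodule L S (obj Y i)" and zero: "pullback i S = {\<zero>\<^bsub>obj X i\<^esub>}"
  shows "S = {\<zero>\<^bsub>obj Y i\<^esub>}"
proof (intro equalityI subsetI)
  fix y assume y: "y \<in> S"
  then have yY: "y \<in> carrier (obj Y i)"
    using submodule_carrier[OF S] by blast
  then have "\<psi> i y \<in> pullback i S"
    using y by (simp add: \<psi>_closed \<phi>\<psi>)
  then have "\<psi> i y = \<zero>\<^bsub>obj X i\<^esub>"
    using zero by blast
  then show "y \<in> {\<zero>\<^bsub>obj Y i\<^esub>}"
    using \<phi>\<psi>[OF yY] \<phi>_zero by simp
qed (use submodule_zero[OF S] in simp)

lemma pullback_disjoint:
  assumes "S \<inter> T = {\<zero>\<^bsub>obj Y i\<^esub>}"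
  shows "pullback i S \<inter> pullback i T = {\<zero>\<^bsub>obj X i\<^esub>}"
proof (intro equalityI subsetI)
  interpret Xi: rmod L "obj X i" by (rule source_rmod)
  fix x assume "x \<in> pullback i S \<inter> pullback i T"
  then have x: "x \<in> carrier (obj X i)" and "\<phi> i x = \<phi> i \<zero>\<^bsub>obj X i\<^esub>"
    using assms \<phi>_zero by auto
  then show "x \<in> {\<zero>\<^bsub>obj X i\<^esub>}"
    using \<phi>_inj[OF x Xi.zero_closed] by simp
next
  interpret Xi: rmod L "obj X i" by (rule source_rmod)
  fix x assume "x \<in> {\<zero>\<^bsub>obj X i\<^esub>}"
  then show "x \<in> pullback i S \<inter> pullback i T"
    using assms \<phi>_zero[of i] by auto
qed

lemma pullback_sum:
  assumes sum: "carrier (obj Y i) = {a \<oplus>\<^bsub>obj Y i\<^esub> b | a b. a \<in> S \<and> b \<in> T}"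
    and S: "S \<subseteq> carrier (obj Y i)" and T: "T \<subseteq> carrier (obj Y i)"
  shows "carrier (obj X i) = {a \<oplus>\<^bsub>obj X i\<^esub> b | a b. a \<in> pullback i S \<and> b \<in> pullback i T}"
proof (intro equalityI subsetI)
  interpret Xi: rmod L "obj X i" by (rule source_rmod)
  fix x assume x: "x \<in> carrier (obj X i)"
  have "\<phi> i x \<in> {a \<oplus>\<^bsub>obj Y i\<^esub> b | a b. a \<in> S \<and> b \<in> T}"
    using \<phi>_closed[OF x] sum by simp
  then obtain a b where ab: "\<phi> i x = a \<oplus>\<^bsub>obj Y i\<^esub> b" "a \<in> S" "b \<in> T"
    by blast
  have abY: "a \<in> carrier (obj Y i)" "b \<in> carrier (obj Y i)"
    using ab S T by blast+
  have "\<phi> i (\<psi> i a \<oplus>\<^bsub>obj X i\<^esub> \<psi> i b) = \<phi> i x"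
    using ab abY by (simp add: \<phi>_add \<psi>_closed \<phi>\<psi>)
  then have "x = \<psi> i a \<oplus>\<^bsub>obj X i\<^esub> \<psi> i b"
    using \<phi>_inj[OF x Xi.a_closed[OF \<psi>_closed[OF abY(1)] \<psi>_closed[OF abY(2)]]] by simp
  moreover have "\<psi> i a \<in> pullback i S" "\<psi> i b \<in> pullback i T"
    using ab abY by (simp_all add: \<psi>_closed \<phi>\<psi>)
  ultimately show "x \<in> {a \<oplus>\<^bsub>obj X i\<^esub> b |a b. a \<in> pullback i S \<and> b \<in> pullback i T}"
    by blast
next
  interpret Xi: rmod L "obj X i" by (rule source_rmod)
  fix x assume "x \<in> {a \<oplus>\<^bsub>obj X i\<^esub> b |a b. a \<in> pullback i S \<and> b \<in> pullback i T}"
  then show "x \<in> carrier (obj X i)"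
    by (auto intro: Xi.a_closed)
qed

lemma decomposition_pullback:
  assumes H: "is_decomposition L Y A B"
  shows "is_decomposition L X (\<lambda>i. pullback i (A i)) (\<lambda>i. pullback i (B i))"
  unfolding is_decomposition_def
proof (intro allI conjI)
  fix i
  note Hi = is_decompositionD[OF H, of i]
  show "submodule L (pullback i (A i)) (obj X i)" "submodule L (pullback i (B i)) (obj X i)"
    by (rule submodule_pullback[OF Hi(1)], rule submodule_pullback[OF Hi(2)])
  show "diff X i ` pullback i (A i) \<subseteq> pullback (i + 1) (A (i + 1))"
    "diff X i ` pullback i (B i) \<subseteq> pullback (i + 1) (B (i + 1))"
    using Hi(3,4) by (auto simp: \<phi>_diff complex_diff_closed[OF source_complex])
  show "pullback i (A i) \<inter> pullback i (B i) = {\<zero>\<^bsub>obj X i\<^esub>}"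
    by (rule pullback_disjoint[OF Hi(5)])
  show "carrier (obj X i) = {a \<oplus>\<^bsub>obj X i\<^esub> b |a b. a \<in> pullback i (A i) \<and> b \<in> pullback i (B i)}"
    by (rule pullback_sum[OF Hi(6) submodule_subset[OF Hi(1)] submodule_subset[OF Hi(2)]])
qed

lemma target_indecomposable:
  assumes ind: "indecomposable L X"
  shows "indecomposable L Y"
  unfolding indecomposable_iff
proof (intro conjI allI impI)
  show "is_complex L Y"
    by (rule target_complex)
  show "\<not> (\<forall>i. zero_mod (obj Y i))"
    using ind source_zero_mod unfolding indecomposable_def by blast
  fix A B assume H: "is_decomposition L Y A B"
  then have "(\<forall>i. pullback i (A i) = {\<zero>\<^bsub>obj X i\<^esub>}) \<or> (\<forall>i. pullback i (B i) = {\<zero>\<^bsub>obj X i\<^esub>})"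
    using ind decomposition_pullback unfolding indecomposable_iff by blast
  then show "(\<forall>i. A i = {\<zero>\<^bsub>obj Y i\<^esub>}) \<or> (\<forall>i. B i = {\<zero>\<^bsub>obj Y i\<^esub>})"
    using pullback_zero is_decompositionD(1,2)[OF H] by blast
qed

end

lemma (in mod_hom_pair) hom_inverse:
  assumes f: "f \<in> mod_hom L M N" and bij: "bij_betw f (carrier M) (carrier N)"
  shows "restrict (inv_into (carrier M) f) (carrier N) \<in> mod_hom L N M"
proof -
  let ?g = "inv_into (carrier M) f"
  have g_closed: "y \<in> carrier N \<Longrightarrow> ?g y \<in> carrier M" for y
    by (metis bij bij_betw_def inv_into_into)
  have fg: "y \<in> carrier N \<Longrightarrow> f (?g y) = y" for y
    by (meson bij bij_betw_inv_into_right)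
  have inj: "x \<in> carrier M \<Longrightarrow> x' \<in> carrier M \<Longrightarrow> f x = f x' \<Longrightarrow> x = x'" for x x'
    using bij by (auto simp: bij_betw_def dest: inj_onD)
  show ?thesis
  proof (rule mod_homI)
    fix u v assume u: "u \<in> carrier N" and v: "v \<in> carrier N"
    have "f (?g u \<oplus>\<^bsub>M\<^esub> ?g v) = f (?g (u \<oplus>\<^bsub>N\<^esub> v))"
      using u v g_closed by (simp add: mod_hom_add[OF f] fg)
    then show "restrict ?g (carrier N) (u \<oplus>\<^bsub>N\<^esub> v) =
        restrict ?g (carrier N) u \<oplus>\<^bsub>M\<^esub> restrict ?g (carrier N) v"
      using u v g_closed inj by simp
  next
    fix u a assume u: "u \<in> carrier N" and a: "a \<in> carrier L"
    have "f (rsmult M (?g u) a) = f (?g (rsmult N u a))"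
      using u a g_closed by (simp add: mod_hom_smult[OF f] fg)
    then show "restrict ?g (carrier N) (rsmult N u a) = rsmult M (restrict ?g (carrier N) u) a"
      using u a g_closed inj by simp
  qed (simp_all add: g_closed)
qed

lemma chain_map_inverse:
  assumes X: "is_complex L X" and Y: "is_complex L Y" and f: "chain_map L X Y f"
    and bij: "\<And>i. bij_betw (f i) (carrier (obj X i)) (carrier (obj Y i))"
  obtains g where "chain_map L Y X g" "\<And>i x. x \<in> carrier (obj X i) \<Longrightarrow> g i (f i x) = x"
    "\<And>i y. y \<in> carrier (obj Y i) \<Longrightarrow> f i (g i y) = y"
proof -
  define g where "g i = restrict (inv_into (carrier (obj X i)) (f i)) (carrier (obj Y i))" for i
  have g_closed: "y \<in> carrier (obj Y i) \<Longrightarrow> g i y \<in> carrier (obj X i)" for i y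
    unfolding g_def by (metis bij bij_betw_def inv_into_into restrict_apply')
  have fg: "y \<in> carrier (obj Y i) \<Longrightarrow> f i (g i y) = y" for i y
    unfolding g_def using bij bij_betw_inv_into_right by fastforce
  have gf: "x \<in> carrier (obj X i) \<Longrightarrow> g i (f i x) = x" for i x
    unfolding g_def using bij bij_betw_inv_into_left bij_betwE by fastforce
  have "chain_map L Y X g"
    unfolding chain_map_def
  proof (intro allI conjI ballI)
    fix i
    show "g i \<in> mod_hom L (obj Y i) (obj X i)"
      unfolding g_def
      by (rule mod_hom_pair.hom_inverse[OF mod_hom_pairI[OF complex_module[OF X] complex_module[OF Y]]
          chain_map_hom[OF f] bij])
    fix y assume y: "y \<in> carrier (obj Y i)"
    have "f (i + 1) (diff X i (g i y)) = diff Y i y"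
      using chain_map_diff[OF f g_closed[OF y]] fg[OF y] by simp
    then have "g (i + 1) (f (i + 1) (diff X i (g i y))) = g (i + 1) (diff Y i y)"
      by simp
    then show "g (i + 1) (diff Y i y) = diff X i (g i y)"
      using gf complex_diff_closed[OF X g_closed[OF y]] by simp
  qed
  then show ?thesis
    using that fg gf by blast
qed

lemma bij_chain_map_is_section:
  assumes "is_complex L X" "is_complex L Y" "chain_map L X Y f"
    and "\<And>i. bij_betw (f i) (carrier (obj X i)) (carrier (obj Y i))"
  shows "is_section L X Y f"
  by (rule chain_map_inverse[OF assms]) (use assms is_sectionI in blast)

lemma bij_chain_map_is_retraction:
  assumes "is_complex L X" "is_complex L Y" "chain_map L X Y f"
    and "\<And>i. bij_betw (f i) (carrier (obj X i)) (carrier (obj Y i))"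
  shows "is_retraction L X Y f"
  by (rule chain_map_inverse[OF assms]) (use assms is_retractionI in blast)

text \<open>Needed because \<open>irreducible\<close> only quantifies over intermediate complexes with carriers in
  \<open>nat \<Rightarrow> 'r\<close>: embed each term into a free module \<open>\<Lambda>^m\<close> and transport the structure.\<close>
lemma in_Cn_isomorphic_copy:
  fixes Z :: "('z, 'r) cplx" and L :: "('r, 'y) ring_scheme"
  assumes Z: "in_Cn L n Z"
  obtains Z' :: "(nat \<Rightarrow> 'r, 'r) cplx" and \<iota> \<kappa>
  where "in_Cn L n Z'" "chain_map L Z Z' \<iota>" "chain_map L Z' Z \<kappa>"
    "\<And>i z. z \<in> carrier (obj Z i) \<Longrightarrow> \<kappa> i (\<iota> i z) = z"
proof -
  have "\<exists>s :: 'z \<Rightarrow> (nat \<Rightarrow> 'r). inj_on s (carrier (obj Z i))" for i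
  proof -
    obtain m p s where "p \<in> mod_hom L (free_mod L m) (obj Z i)" "s \<in> mod_hom L (obj Z i) (free_mod L m)"
      and ps: "\<forall>x\<in>carrier (obj Z i). p (s x) = x"
      using in_Cn_fg_projective[OF Z, of i] unfolding fg_projective_def by blast
    have "inj_on s (carrier (obj Z i))"
      by (rule inj_on_inverseI[of _ p]) (use ps in blast)
    then show ?thesis by blast
  qed
  then obtain s :: "int \<Rightarrow> 'z \<Rightarrow> (nat \<Rightarrow> 'r)" where s: "\<And>i. inj_on (s i) (carrier (obj Z i))"
    by metis
  define \<kappa>0 where "\<kappa>0 i = inv_into (carrier (obj Z i)) (s i)" for i
  define Z' :: "(nat \<Rightarrow> 'r, 'r) cplx"
    where "Z' = \<lparr>obj = (\<lambda>i. \<lparr>carrier = s i ` carrier (obj Z i),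
      monoid.mult = (\<lambda>u v. undefined), one = undefined, zero = s i \<zero>\<^bsub>obj Z i\<^esub>,
      add = (\<lambda>u v. s i (\<kappa>0 i u \<oplus>\<^bsub>obj Z i\<^esub> \<kappa>0 i v)),
      rsmult = (\<lambda>u a. s i (rsmult (obj Z i) (\<kappa>0 i u) a))\<rparr>),
      diff = (\<lambda>i. \<lambda>u\<in>s i ` carrier (obj Z i). s (i + 1) (diff Z i (\<kappa>0 i u)))\<rparr>"
  have \<kappa>0s: "\<And>i x. x \<in> carrier (obj Z i) \<Longrightarrow> \<kappa>0 i (s i x) = x"
    unfolding \<kappa>0_def using s by simp
  interpret cplx_transfer L Z Z' s
  proof (unfold_locales, goal_cases)
    case 1
    show ?case by (rule in_Cn_complex[OF Z])
  next
    case (2 i)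
    show ?case unfolding Z'_def using s by (simp add: bij_betw_def)
  qed (simp_all add: Z'_def \<kappa>0s)
  have "bij_betw (restrict (s i) (carrier (obj Z i))) (carrier (obj Z i)) (carrier (obj Z' i))" for i
    using bij[of i] by (simp add: bij_betw_def inj_on_def)
  then obtain \<kappa> where "chain_map L Z' Z \<kappa>"
    "\<And>i z. z \<in> carrier (obj Z i) \<Longrightarrow> \<kappa> i (restrict (s i) (carrier (obj Z i)) z) = z"
    using chain_map_inverse[OF source_complex target_complex transfer_chain_map] by metis
  then show ?thesis
    using that target_in_Cn[OF Z] transfer_chain_map by blast
qed

lemma irreducible_factorization:
  fixes Z :: "('z, 'r) cplx"
  assumes irr: "irreducible L n X Y f" and Z: "in_Cn L n Z" and h: "chain_map L X Z h"
    and g: "chain_map L Z Y g" and fgh: "f = cmp X g h"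
  shows "is_section L X Z h \<or> is_retraction L Z Y g"
proof -
  obtain Z' :: "(nat \<Rightarrow> 'r, 'r) cplx" and \<iota> \<kappa> where Z': "in_Cn L n Z'" and \<iota>: "chain_map L Z Z' \<iota>"
    and \<kappa>: "chain_map L Z' Z \<kappa>" and \<kappa>\<iota>: "\<And>i z. z \<in> carrier (obj Z i) \<Longrightarrow> \<kappa> i (\<iota> i z) = z"
    using in_Cn_isomorphic_copy[OF Z] by metis
  have X: "is_complex L X" and Y: "is_complex L Y"
    using irr in_Cn_complex unfolding irreducible_def by blast+
  note Z_cplx = in_Cn_complex[OF Z] and Z'_cplx = in_Cn_complex[OF Z']
  have "f = cmp X (cmp Z' g \<kappa>) (cmp X \<iota> h)"
    unfolding fgh cmp_def by (intro ext restrict_ext) (simp add: chain_map_closed[OF h] chain_map_closed[OF \<iota>] \<kappa>\<iota>)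
  then have "is_section L X Z' (cmp X \<iota> h) \<or> is_retraction L Z' Y (cmp Z' g \<kappa>)"
    using irr Z' chain_map_cmp[OF X h \<iota>] chain_map_cmp[OF Z'_cplx \<kappa> g] unfolding irreducible_def by blast
  then show ?thesis
  proof
    assume "is_section L X Z' (cmp X \<iota> h)"
    then obtain r where r: "chain_map L Z' X r" and rh: "\<And>i x. x \<in> carrier (obj X i) \<Longrightarrow> r i (cmp X \<iota> h i x) = x"
      by (erule is_sectionE)
    have "is_section L X Z h"
      by (rule is_sectionI[OF X h chain_map_cmp[OF Z_cplx \<iota> r]])
        (use rh in \<open>simp add: chain_map_closed[OF h]\<close>)
    then show ?thesis ..
  next
    assume "is_retraction L Z' Y (cmp Z' g \<kappa>)"
    then obtain t where t: "chain_map L Y Z' t" and gt: "\<And>i y. y \<in> carrier (obj Y i) \<Longrightarrow> cmp Z' g \<kappa> i (t i y) = y"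
      by (erule is_retractionE)
    have "is_retraction L Z Y g"
      by (rule is_retractionI[OF Y g chain_map_cmp[OF Y t \<kappa>]])
        (use gt in \<open>simp add: chain_map_closed[OF t]\<close>)
    then show ?thesis ..
  qed
qed
section \<open>Kernels of irreducible morphisms of type (ret)\<close>

lemma mod_ker_closed_diff:
  assumes X: "is_complex L X" and Y: "is_complex L Y" and f: "chain_map L X Y f"
    and x: "x \<in> mod_ker (obj X i) (obj Y i) (f i)"
  shows "diff X i x \<in> mod_ker (obj X (i + 1)) (obj Y (i + 1)) (f (i + 1))"
  using x chain_map_diff[OF f] complex_diff_closed[OF X]
    mod_hom_pair.hom_zero[OF mod_hom_pairI[OF complex_module[OF Y] complex_module[OF Y]] complex_diff_hom[OF Y]]
  by simp

lemma ker_cplx_complex: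
  assumes X: "is_complex L X" and Y: "is_complex L Y" and f: "chain_map L X Y f"
  shows "is_complex L (ker_cplx X Y f)"
  unfolding ker_cplx_eq_subcomplex
  using mod_hom_pair.submodule_mod_ker[OF mod_hom_pairI[OF complex_module[OF X] complex_module[OF Y]] chain_map_hom[OF f]]
    mod_ker_closed_diff[OF X Y f]
  by (intro subcomplex_complex[OF X]) auto

lemma ker_cplx_in_Cn:
  assumes X: "in_Cn L n X" and Y: "in_Cn L n Y" and f: "chain_map L X Y f"
    and t: "\<And>i. t i \<in> mod_hom L (obj Y i) (obj X i)" and ft: "\<And>i y. y \<in> carrier (obj Y i) \<Longrightarrow> f i (t i y) = y"
  shows "in_Cn L n (ker_cplx X Y f)"
proof (rule in_Cn_restrict[OF X ker_cplx_complex])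
  fix i
  interpret mod_hom_pair L "obj X i" "obj Y i"
    by (rule mod_hom_pairI[OF complex_module[OF in_Cn_complex[OF X]] complex_module[OF in_Cn_complex[OF Y]]])
  show "submodule L (mod_ker (obj X i) (obj Y i) (f i)) (obj X i)"
    by (rule submodule_mod_ker[OF chain_map_hom[OF f]])
  show "projection_onto L (obj X i) (mod_ker (obj X i) (obj Y i) (f i))
      (complement_map (obj X i) (compose (carrier (obj X i)) (t i) (f i)))"
    by (rule projection_onto_kernel(1)[OF chain_map_hom[OF f] t ft])
qed (use X Y f in_Cn_complex in \<open>simp_all add: ker_cplx_eq_subcomplex\<close>)

lemma ker_cplx_nonzero:
  assumes X: "in_Cn L n X" and Y: "in_Cn L n Y" and f: "chain_map L X Y f"
    and ft: "\<And>i y. y \<in> carrier (obj Y i) \<Longrightarrow> f i (t i y) = y"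
    and t: "\<And>i. t i \<in> mod_hom L (obj Y i) (obj X i)"
    and not_section: "\<not> is_section L X Y f"
  shows "\<not> (\<forall>i. zero_mod (obj (ker_cplx X Y f) i))"
proof
  assume zero: "\<forall>i. zero_mod (obj (ker_cplx X Y f) i)"
  have "bij_betw (f i) (carrier (obj X i)) (carrier (obj Y i))" for i
  proof -
    interpret mod_hom_pair L "obj X i" "obj Y i"
      by (rule mod_hom_pairI[OF complex_module[OF in_Cn_complex[OF X]] complex_module[OF in_Cn_complex[OF Y]]])
    note fi = chain_map_hom[OF f, of i]
    have "inj_on (f i) (carrier (obj X i))"
    proof (rule inj_onI)
      fix x y assume x: "x \<in> carrier (obj X i)" and y: "y \<in> carrier (obj X i)" and "f i x = f i y"
      then have "x \<ominus>\<^bsub>obj X i\<^esub> y \<in> mod_ker (obj X i) (obj Y i) (f i)"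
        by (simp add: hom_minus[OF fi] mod_hom_closed[OF fi])
      moreover have "mod_ker (obj X i) (obj Y i) (f i) = {\<zero>\<^bsub>obj X i\<^esub>}"
        using zero unfolding zero_mod_def by (simp add: ker_cplx_eq_subcomplex)
      ultimately have "x \<ominus>\<^bsub>obj X i\<^esub> y = \<zero>\<^bsub>obj X i\<^esub>"
        by blast
      then show "x = y"
        using x y M.minus_eq_zero_iff by blast
    qed
    moreover have "f i ` carrier (obj X i) = carrier (obj Y i)"
    proof (intro equalityI subsetI)
      fix y assume y: "y \<in> carrier (obj Y i)"
      show "y \<in> f i ` carrier (obj X i)"
        using image_eqI[of y "f i" "t i y", OF ft[OF y, symmetric] mod_hom_closed[OF t y]] .
    qed (use mod_hom_closed[OF fi] in blast)
    ultimately show ?thesis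
      by (simp add: bij_betw_def)
  qed
  then show False
    using not_section bij_chain_map_is_section[OF in_Cn_complex[OF X] in_Cn_complex[OF Y] f] by blast
qed

locale ker_decomposition =
  fixes L :: "('r, 'y) ring_scheme" and n :: nat and X :: "('a, 'r) cplx" and Y :: "('b, 'r) cplx"
    and f :: "int \<Rightarrow> 'a \<Rightarrow> 'b" and t :: "int \<Rightarrow> 'b \<Rightarrow> 'a" and A B :: "int \<Rightarrow> 'a set"
  assumes X_in_Cn: "in_Cn L n X" and Y_in_Cn: "in_Cn L n Y" and f: "chain_map L X Y f"
    and t: "\<And>i. t i \<in> mod_hom L (obj Y i) (obj X i)"
    and ft: "\<And>i y. y \<in> carrier (obj Y i) \<Longrightarrow> f i (t i y) = y"
    and decomposition: "is_decomposition L (ker_cplx X Y f) A B"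
begin

abbreviation K :: "int \<Rightarrow> 'a set"
  where "K i \<equiv> mod_ker (obj X i) (obj Y i) (f i)"

lemma X_complex: "is_complex L X"
  using X_in_Cn by (rule in_Cn_complex)

lemma Y_complex: "is_complex L Y"
  using Y_in_Cn by (rule in_Cn_complex)

lemma X_rmod: "rmod L (obj X i)"
  by (rule complex_rmod[OF X_complex])

lemma XY_pair: "mod_hom_pair L (obj X i) (obj Y i)"
  by (rule mod_hom_pairI[OF complex_module[OF X_complex] complex_module[OF Y_complex]])

lemma XX_pair: "mod_hom_pair L (obj X i) (obj X j)"
  by (rule mod_hom_pairI[OF complex_module[OF X_complex] complex_module[OF X_complex]])

lemma f_hom: "f i \<in> mod_hom L (obj X i) (obj Y i)"
  by (rule chain_map_hom[OF f])

lemma K_submodule: "submodule L (K i) (obj X i)"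
  by (rule mod_hom_pair.submodule_mod_ker[OF XY_pair f_hom])

lemma swap: "ker_decomposition L n X Y f t B A"
  by (rule ker_decomposition.intro[OF X_in_Cn Y_in_Cn f t ft
      is_decomposition_swap[OF ker_cplx_complex[OF X_complex Y_complex f] decomposition]])

lemma summands:
  shows "submodule L (A i) (obj X i)" "submodule L (B i) (obj X i)"
    and "A i \<subseteq> K i" "B i \<subseteq> K i"
    and "diff X i ` A i \<subseteq> A (i + 1)"
    and "A i \<inter> B i = {\<zero>\<^bsub>obj X i\<^esub>}"
    and "k \<in> K i \<Longrightarrow> \<exists>a\<in>A i. \<exists>b\<in>B i. k = a \<oplus>\<^bsub>obj X i\<^esub> b"
proof -
  note D = is_decompositionD[OF decomposition, of i, unfolded ker_cplx_eq_subcomplex subcomplex_obj subcomplex_diff]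
  show AK: "A i \<subseteq> K i" and "B i \<subseteq> K i"
    using submodule_subset[OF D(1)] submodule_subset[OF D(2)] by simp_all
  show "submodule L (A i) (obj X i)" "submodule L (B i) (obj X i)"
    using rmod.submodule_trans[OF X_rmod K_submodule] D(1,2) by blast+
  show "diff X i ` A i \<subseteq> A (i + 1)"
  proof
    fix y assume "y \<in> diff X i ` A i"
    then obtain a where a: "a \<in> A i" and "y = diff X i a"
      by blast
    then have "y = restrict (diff X i) (K i) a"
      using AK by auto
    then show "y \<in> A (i + 1)"
      using D(3) a by blast
  qed
  show "A i \<inter> B i = {\<zero>\<^bsub>obj X i\<^esub>}"
    using D(5) by simp
  have KE: "K i = {a \<oplus>\<^bsub>obj X i\<^esub> b |a b. a \<in> A i \<and> b \<in> B i}"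
    using D(6) by simp
  show "k \<in> K i \<Longrightarrow> \<exists>a\<in>A i. \<exists>b\<in>B i. k = a \<oplus>\<^bsub>obj X i\<^esub> b"
    unfolding KE by blast
qed

lemma summands_kernel:
  shows "a \<in> A i \<Longrightarrow> f i a = \<zero>\<^bsub>obj Y i\<^esub>" and "b \<in> B i \<Longrightarrow> f i b = \<zero>\<^bsub>obj Y i\<^esub>"
proof -
  show "a \<in> A i \<Longrightarrow> f i a = \<zero>\<^bsub>obj Y i\<^esub>"
    using summands(3)[of i] by (simp add: subset_iff)
  show "b \<in> B i \<Longrightarrow> f i b = \<zero>\<^bsub>obj Y i\<^esub>"
    using summands(4)[of i] by (simp add: subset_iff)
qed

definition eK :: "int \<Rightarrow> 'a \<Rightarrow> 'a"
  where "eK i = complement_map (obj X i) (compose (carrier (obj X i)) (t i) (f i))"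

lemma degree_decomposition: "decomposed_projection L (obj X i) (K i) (A i) (B i) (eK i)"
proof (intro decomposed_projection.intro decomposed_projection_axioms.intro)
  show "rmod L (obj X i)"
    by (rule X_rmod)
  show "projection_onto L (obj X i) (K i) (eK i)"
    unfolding eK_def by (rule mod_hom_pair.projection_onto_kernel(1)[OF XY_pair f_hom t ft])
  show "submodule L (A i) (obj X i)" "submodule L (B i) (obj X i)" "A i \<subseteq> K i" "B i \<subseteq> K i"
    "A i \<inter> B i = {\<zero>\<^bsub>obj X i\<^esub>}"
    by (rule summands)+
  show "\<And>k. k \<in> K i \<Longrightarrow> \<exists>a\<in>A i. \<exists>b\<in>B i. k = a \<oplus>\<^bsub>obj X i\<^esub> b"
    by (rule summands(7))
qed

definition \<pi>A :: "int \<Rightarrow> 'a \<Rightarrow> 'a"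
  where "\<pi>A i = decomposed_projection.proj (obj X i) (A i) (B i) (eK i)"

lemmas \<pi>A_hom = decomposed_projection.proj_hom[OF degree_decomposition, folded \<pi>A_def]
lemmas \<pi>A_mem = decomposed_projection.proj_mem[OF degree_decomposition, folded \<pi>A_def]
lemmas \<pi>A_first = decomposed_projection.proj_first[OF degree_decomposition, folded \<pi>A_def]
lemmas \<pi>A_second = decomposed_projection.proj_second[OF degree_decomposition, folded \<pi>A_def]
lemmas \<pi>A_idem = decomposed_projection.proj_idem[OF degree_decomposition, folded \<pi>A_def]
lemmas \<pi>A_carrier = decomposed_projection.proj_carrier[OF degree_decomposition, folded \<pi>A_def]

lemma kernel_in_second:
  assumes k: "k \<in> K i" and "\<pi>A i k = \<zero>\<^bsub>obj X i\<^esub>"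
  shows "k \<in> B i"
proof -
  interpret rmod L "obj X i" by (rule X_rmod)
  have "eK i k = k"
    using k projection_ontoD(3)[OF decomposed_projection.projection[OF degree_decomposition]] by blast
  moreover have "k \<in> carrier (obj X i)"
    using k by simp
  ultimately show ?thesis
    using \<pi>A_mem(2)[of k i] assms(2) by simp
qed

end
context ker_decomposition
begin

abbreviation C :: "int \<Rightarrow> 'a set"
  where "C i \<equiv> mod_ker (obj X i) (obj X i) (\<pi>A i)"

definition hA :: "int \<Rightarrow> 'a \<Rightarrow> 'a"
  where "hA i = complement_map (obj X i) (\<pi>A i)"

text \<open>The quotient \<open>X/A\<close>, realised on the complement \<open>C = Ker \<pi>A\<close> of \<open>A\<close>.\<close>
definition X_mod_A :: "('a, 'r) cplx"
  where "X_mod_A = projected_cplx X C hA"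

definition gA :: "int \<Rightarrow> 'a \<Rightarrow> 'b"
  where "gA i = restrict (f i) (C i)"

lemma C_submodule: "submodule L (C i) (obj X i)"
  by (rule mod_hom_pair.submodule_mod_ker[OF XX_pair \<pi>A_hom])

lemma hA_projection: "projection_onto L (obj X i) (C i) (hA i)"
  unfolding hA_def by (rule rmod.projection_onto_complement[OF X_rmod \<pi>A_hom \<pi>A_idem])

lemma hA_hom: "hA i \<in> mod_hom L (obj X i) (obj X i)"
  by (rule projection_ontoD(1)[OF hA_projection])

lemma hA_eq: "x \<in> carrier (obj X i) \<Longrightarrow> hA i x = x \<ominus>\<^bsub>obj X i\<^esub> \<pi>A i x"
  by (simp add: hA_def complement_map_def)

lemma hA_first: "a \<in> A i \<Longrightarrow> hA i a = \<zero>\<^bsub>obj X i\<^esub>"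
  using rmod.complement_map_eq_zero_iff[OF X_rmod \<pi>A_hom] \<pi>A_first submodule_carrier[OF summands(1)]
  unfolding hA_def by blast

lemma hA_second:
  assumes b: "b \<in> B i"
  shows "hA i b = b"
proof -
  interpret rmod L "obj X i" by (rule X_rmod)
  show ?thesis
    using hA_eq \<pi>A_second[OF b] submodule_carrier[OF summands(2) b] by simp
qed

lemma f_\<pi>A: "x \<in> carrier (obj X i) \<Longrightarrow> f i (\<pi>A i x) = \<zero>\<^bsub>obj Y i\<^esub>"
  by (rule summands_kernel(1)[OF \<pi>A_mem(1)])

lemma f_hA:
  assumes x: "x \<in> carrier (obj X i)"
  shows "f i (hA i x) = f i x"
proof -
  interpret mod_hom_pair L "obj X i" "obj Y i" by (rule XY_pair)
  show ?thesis
    using x \<pi>A_carrier[OF x] f_\<pi>A[OF x] mod_hom_closed[OF f_hom x]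
    by (simp add: hA_eq hom_minus[OF f_hom])
qed

lemma hA_diff: 
  assumes x: "x \<in> carrier (obj X i)"
  shows "hA (i + 1) (diff X i (hA i x)) = hA (i + 1) (diff X i x)"
proof -
  interpret X': mod_hom_pair L "obj X i" "obj X (i + 1)" by (rule XX_pair)
  interpret X'': mod_hom_pair L "obj X (i + 1)" "obj X (i + 1)" by (rule XX_pair)
  have dx: "diff X i x \<in> carrier (obj X (i + 1))" and dp: "diff X i (\<pi>A i x) \<in> carrier (obj X (i + 1))"
    using x \<pi>A_carrier complex_diff_closed[OF X_complex] by blast+
  have "diff X i (\<pi>A i x) \<in> A (i + 1)"
    using summands(5) \<pi>A_mem(1)[OF x] by blast
  then have "hA (i + 1) (diff X i (\<pi>A i x)) = \<zero>\<^bsub>obj X (i + 1)\<^esub>"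
    by (rule hA_first)
  moreover have "diff X i (hA i x) = diff X i x \<ominus>\<^bsub>obj X (i + 1)\<^esub> diff X i (\<pi>A i x)"
    using x \<pi>A_carrier by (simp add: hA_eq X'.hom_minus[OF complex_diff_hom[OF X_complex]])
  ultimately show ?thesis
    using dx dp mod_hom_closed[OF hA_hom dx] by (simp add: X''.hom_minus[OF hA_hom])
qed

lemma X_mod_A_complex: "is_complex L X_mod_A"
  unfolding X_mod_A_def by (rule projected_cplx_complex[OF X_complex C_submodule hA_projection hA_diff])

lemma X_mod_A_in_Cn: "in_Cn L n X_mod_A"
  by (rule in_Cn_restrict[OF X_in_Cn X_mod_A_complex _ C_submodule hA_projection]) (simp add: X_mod_A_def)

lemma hA_chain: "chain_map L X X_mod_A hA"
  unfolding X_mod_A_def by (rule projected_cplx_chain_map[OF X_complex hA_projection hA_diff])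

lemma gA_chain: "chain_map L X_mod_A Y gA"
  unfolding chain_map_def
proof (intro allI conjI ballI)
  fix i
  show "gA i \<in> mod_hom L (obj X_mod_A i) (obj Y i)"
    using mod_hom_restrict[OF f_hom C_submodule] by (simp add: gA_def X_mod_A_def)
  fix x assume "x \<in> carrier (obj X_mod_A i)"
  then have x: "x \<in> C i"
    by (simp add: X_mod_A_def)
  have dx: "diff X i x \<in> carrier (obj X (i + 1))"
    using x complex_diff_closed[OF X_complex] by simp
  show "gA (i + 1) (diff X_mod_A i x) = diff Y i (gA i x)"
    using x projection_ontoD(2)[OF hA_projection dx] f_hA[OF dx] chain_map_diff[OF f]
    by (simp add: gA_def X_mod_A_def)
qed

lemma f_factors: "f = cmp X gA hA"
proof (rule chain_map_eqI[OF f chain_map_cmp[OF X_complex hA_chain gA_chain]])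
  fix i x assume "x \<in> carrier (obj X i)"
  then show "f i x = cmp X gA hA i x"
    using projection_ontoD(2)[OF hA_projection] f_hA by (simp add: gA_def)
qed

lemma hA_not_section:
  assumes "A i \<noteq> {\<zero>\<^bsub>obj X i\<^esub>}"
  shows "\<not> is_section L X X_mod_A hA"
proof
  assume "is_section L X X_mod_A hA"
  then obtain r where "chain_map L X_mod_A X r" and "\<And>j x. x \<in> carrier (obj X j) \<Longrightarrow> r j (hA j x) = x"
    by (erule is_sectionE)
  moreover obtain a where a: "a \<in> A i" "a \<noteq> \<zero>\<^bsub>obj X i\<^esub>"
    using assms submodule_zero[OF summands(1)] by blast
  moreover note A0 = submodule_zero[OF summands(1), of i]
  ultimately have "a = \<zero>\<^bsub>obj X i\<^esub>"
    using hA_first submodule_carrier[OF summands(1)] by metis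
  with a show False
    by simp
qed

lemma quotient_splitting:
  assumes irr: "irreducible L n X Y f" and nonzero: "A i \<noteq> {\<zero>\<^bsub>obj X i\<^esub>}"
  obtains s where "chain_map L Y X_mod_A s" "\<And>i y. y \<in> carrier (obj Y i) \<Longrightarrow> f i (s i y) = y"
proof -
  have "is_retraction L X_mod_A Y gA"
    using irreducible_factorization[OF irr X_mod_A_in_Cn hA_chain gA_chain f_factors] hA_not_section[OF nonzero]
    by blast
  then obtain s where s: "chain_map L Y X_mod_A s" and gs: "\<And>i y. y \<in> carrier (obj Y i) \<Longrightarrow> gA i (s i y) = y"
    by (erule is_retractionE)
  have "f i (s i y) = y" if "y \<in> carrier (obj Y i)" for i y
    using gs[OF that] chain_map_closed[OF s that] by (simp add: gA_def X_mod_A_def)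
  then show ?thesis
    using s that by blast
qed

lemma splitting_into_X:
  assumes s: "chain_map L Y X_mod_A s"
  shows "s i \<in> mod_hom L (obj Y i) (obj X i)"
    and "y \<in> carrier (obj Y i) \<Longrightarrow> s i y \<in> C i"
    and "y \<in> carrier (obj Y i) \<Longrightarrow> hA (i + 1) (diff X i (s i y)) = s (i + 1) (diff Y i y)"
proof -
  show "s i \<in> mod_hom L (obj Y i) (obj X i)"
    by (rule mod_hom_extend_codomain[where S = "C i"])
      (use chain_map_hom[OF s, of i] in \<open>auto simp: X_mod_A_def\<close>)
  show sC: "y \<in> carrier (obj Y i) \<Longrightarrow> s i y \<in> C i"
    using chain_map_closed[OF s] by (simp add: X_mod_A_def)
  show "y \<in> carrier (obj Y i) \<Longrightarrow> hA (i + 1) (diff X i (s i y)) = s (i + 1) (diff Y i y)"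
    using sC chain_map_diff[OF s] by (simp add: X_mod_A_def)
qed

end
context ker_decomposition
begin

text \<open>Given a splitting \<open>s\<close> of \<open>f\<close> through \<open>X/A\<close>, the map \<open>hA - s f\<close> kills \<open>A\<close> and the image
  of \<open>s\<close>, and it is a chain endomorphism of \<open>X\<close> projecting onto \<open>B\<close>.\<close>
definition splitting_projection :: "(int \<Rightarrow> 'b \<Rightarrow> 'a) \<Rightarrow> int \<Rightarrow> 'a \<Rightarrow> 'a"
  where "splitting_projection s i = (\<lambda>x\<in>carrier (obj X i). hA i x \<ominus>\<^bsub>obj X i\<^esub> s i (f i x))"

lemma splitting_projection_hom:
  assumes s: "chain_map L Y X_mod_A s"
  shows "splitting_projection s i \<in> mod_hom L (obj X i) (obj X i)"
proof -
  have "(\<lambda>x\<in>carrier (obj X i). hA i x \<ominus>\<^bsub>obj X i\<^esub> compose (carrier (obj X i)) (s i) (f i) x)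
      \<in> mod_hom L (obj X i) (obj X i)"
    by (rule mod_hom_pair.hom_minus_fun[OF XX_pair hA_hom mod_hom_compose[OF X_rmod f_hom splitting_into_X(1)[OF s]]])
  then show ?thesis
    by (simp add: splitting_projection_def compose_def cong: restrict_cong)
qed

lemma splitting_projection_second:
  assumes s: "chain_map L Y X_mod_A s" and fs: "\<And>i y. y \<in> carrier (obj Y i) \<Longrightarrow> f i (s i y) = y"
    and x: "x \<in> carrier (obj X i)"
  shows "splitting_projection s i x \<in> B i"
proof -
  interpret XY: mod_hom_pair L "obj X i" "obj Y i" by (rule XY_pair)
  interpret XX: mod_hom_pair L "obj X i" "obj X i" by (rule XX_pair)
  have fx: "f i x \<in> carrier (obj Y i)"
    using mod_hom_closed[OF f_hom x] .
  have hx: "hA i x \<in> C i" and sfx: "s i (f i x) \<in> C i"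
    using projection_ontoD(2)[OF hA_projection x] splitting_into_X(2)[OF s fx] .
  have "f i (splitting_projection s i x) = \<zero>\<^bsub>obj Y i\<^esub>"
    using x hx sfx fx by (simp add: splitting_projection_def XY.hom_minus[OF f_hom] f_hA fs)
  moreover have "\<pi>A i (splitting_projection s i x) = \<zero>\<^bsub>obj X i\<^esub>"
    using x hx sfx by (simp add: splitting_projection_def XX.hom_minus[OF \<pi>A_hom])
  ultimately show ?thesis
    using mod_hom_closed[OF splitting_projection_hom[OF s] x] by (intro kernel_in_second) simp_all
qed

lemma splitting_projection_on_second:
  assumes s: "chain_map L Y X_mod_A s" and b: "b \<in> B i"
  shows "splitting_projection s i b = b"
proof -
  interpret YX: mod_hom_pair L "obj Y i" "obj X i"
    by (rule mod_hom_pairI[OF complex_module[OF Y_complex] complex_module[OF X_complex]])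
  have "b \<in> carrier (obj X i)" and "f i b = \<zero>\<^bsub>obj Y i\<^esub>"
    using b submodule_carrier[OF summands(2)] summands_kernel(2) by blast+
  then show ?thesis
    using hA_second[OF b] YX.hom_zero[OF splitting_into_X(1)[OF s]] by (simp add: splitting_projection_def)
qed

lemma splitting_projection_chain:
  assumes s: "chain_map L Y X_mod_A s" and fs: "\<And>i y. y \<in> carrier (obj Y i) \<Longrightarrow> f i (s i y) = y"
  shows "chain_map L X X (splitting_projection s)"
  unfolding chain_map_def
proof (intro allI conjI ballI)
  interpret S: ker_decomposition L n X Y f t B A by (rule swap)
  fix i
  show "splitting_projection s i \<in> mod_hom L (obj X i) (obj X i)"
    by (rule splitting_projection_hom[OF s])
  fix x assume x: "x \<in> carrier (obj X i)"
  interpret X1: mod_hom_pair L "obj X i" "obj X (i + 1)" by (rule XX_pair)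
  interpret X2: mod_hom_pair L "obj X (i + 1)" "obj X (i + 1)" by (rule XX_pair)
  note d = complex_diff_hom[OF X_complex, of i]
  have fx: "f i x \<in> carrier (obj Y i)"
    using mod_hom_closed[OF f_hom x] .
  have hx: "hA i x \<in> carrier (obj X i)" and sfx: "s i (f i x) \<in> carrier (obj X i)"
    using mod_hom_closed[OF hA_hom x] splitting_into_X(2)[OF s fx] by simp_all
  have "splitting_projection s (i + 1) (diff X i x)
      = hA (i + 1) (diff X i (hA i x)) \<ominus>\<^bsub>obj X (i + 1)\<^esub> hA (i + 1) (diff X i (s i (f i x)))"
    using complex_diff_closed[OF X_complex x] hA_diff[OF x] splitting_into_X(3)[OF s fx]
    by (simp add: splitting_projection_def chain_map_diff[OF f x])
  also have "\<dots> = hA (i + 1) (diff X i (splitting_projection s i x))"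
    using x hx sfx mod_hom_closed[OF d hx] mod_hom_closed[OF d sfx]
    by (simp add: splitting_projection_def X1.hom_minus[OF d] X2.hom_minus[OF hA_hom])
  also have "\<dots> = diff X i (splitting_projection s i x)"
    using S.summands(5) splitting_projection_second[OF s fs x] by (intro hA_second) blast
  finally show "splitting_projection s (i + 1) (diff X i x) = diff X i (splitting_projection s i x)" .
qed

text \<open>Correcting a splitting \<open>s\<close> through \<open>X/A\<close> by a chain projection \<open>q\<close> onto \<open>A\<close> yields a splitting
  of \<open>f\<close> itself: \<open>s\<close> commutes with the differentials up to terms in \<open>A\<close>, which \<open>1 - q\<close> removes.\<close>
definition corrected_splitting :: "(int \<Rightarrow> 'b \<Rightarrow> 'a) \<Rightarrow> (int \<Rightarrow> 'a \<Rightarrow> 'a) \<Rightarrow> int \<Rightarrow> 'b \<Rightarrow> 'a"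
  where "corrected_splitting s q i = (\<lambda>y\<in>carrier (obj Y i). s i y \<ominus>\<^bsub>obj X i\<^esub> q i (s i y))"

lemma corrected_splitting_hom:
  assumes s: "chain_map L Y X_mod_A s" and q: "chain_map L X X q"
  shows "corrected_splitting s q i \<in> mod_hom L (obj Y i) (obj X i)"
proof -
  interpret YX: mod_hom_pair L "obj Y i" "obj X i"
    by (rule mod_hom_pairI[OF complex_module[OF Y_complex] complex_module[OF X_complex]])
  note sX = splitting_into_X(1)[OF s]
  have "(\<lambda>y\<in>carrier (obj Y i). s i y \<ominus>\<^bsub>obj X i\<^esub> compose (carrier (obj Y i)) (q i) (s i) y)
      \<in> mod_hom L (obj Y i) (obj X i)"
    by (rule YX.hom_minus_fun[OF sX mod_hom_compose[OF YX.M.rmod_axioms sX chain_map_hom[OF q]]])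
  then show ?thesis
    by (simp add: corrected_splitting_def compose_def cong: restrict_cong)
qed

lemma corrected_splitting_right_inverse:
  assumes s: "chain_map L Y X_mod_A s" and fs: "\<And>i y. y \<in> carrier (obj Y i) \<Longrightarrow> f i (s i y) = y"
    and q: "chain_map L X X q" and q_A: "\<And>i x. x \<in> carrier (obj X i) \<Longrightarrow> q i x \<in> A i"
    and y: "y \<in> carrier (obj Y i)"
  shows "f i (corrected_splitting s q i y) = y"
proof -
  interpret XY: mod_hom_pair L "obj X i" "obj Y i" by (rule XY_pair)
  have sy: "s i y \<in> carrier (obj X i)"
    using splitting_into_X(2)[OF s y] by simp
  have "f i (q i (s i y)) = \<zero>\<^bsub>obj Y i\<^esub>"
    using q_A[OF sy] by (rule summands_kernel(1))
  then show ?thesis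
    using y sy chain_map_closed[OF q sy] fs[OF y]
    by (simp add: corrected_splitting_def XY.hom_minus[OF f_hom])
qed

lemma corrected_splitting_chain:
  assumes s: "chain_map L Y X_mod_A s"
    and q: "chain_map L X X q" and q_first: "\<And>i a. a \<in> A i \<Longrightarrow> q i a = a"
  shows "chain_map L Y X (corrected_splitting s q)"
  unfolding chain_map_def
proof (intro allI conjI ballI)
  fix i
  show "corrected_splitting s q i \<in> mod_hom L (obj Y i) (obj X i)"
    by (rule corrected_splitting_hom[OF s q])
  fix y assume y: "y \<in> carrier (obj Y i)"
  interpret X1: mod_hom_pair L "obj X i" "obj X (i + 1)" by (rule XX_pair)
  let ?u = "s i y" and ?s' = "s (i + 1) (diff Y i y)"
  define w where "w = \<pi>A (i + 1) (diff X i ?u)"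
  have u: "?u \<in> carrier (obj X i)" and dy: "diff Y i y \<in> carrier (obj Y (i + 1))"
    using splitting_into_X(2)[OF s y] complex_diff_closed[OF Y_complex y] by simp_all
  have du: "diff X i ?u \<in> carrier (obj X (i + 1))"
    using complex_diff_closed[OF X_complex u] .
  have w: "w \<in> A (i + 1)" and wX: "w \<in> carrier (obj X (i + 1))"
    unfolding w_def using \<pi>A_mem(1)[OF du] \<pi>A_carrier[OF du] by simp_all
  have s': "?s' \<in> carrier (obj X (i + 1))"
    using splitting_into_X(2)[OF s dy] by simp
  have "?s' = diff X i ?u \<ominus>\<^bsub>obj X (i + 1)\<^esub> w"
    using splitting_into_X(3)[OF s y] du by (simp add: hA_eq w_def)
  then have du_eq: "diff X i ?u = ?s' \<oplus>\<^bsub>obj X (i + 1)\<^esub> w"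
    using du wX by simp
  have "diff X i (corrected_splitting s q i y) = diff X i ?u \<ominus>\<^bsub>obj X (i + 1)\<^esub> q (i + 1) (diff X i ?u)"
    using y u chain_map_closed[OF q u]
    by (simp add: corrected_splitting_def X1.hom_minus[OF complex_diff_hom[OF X_complex]] chain_map_diff[OF q u])
  also have "\<dots> = (?s' \<oplus>\<^bsub>obj X (i + 1)\<^esub> w) \<ominus>\<^bsub>obj X (i + 1)\<^esub> (q (i + 1) ?s' \<oplus>\<^bsub>obj X (i + 1)\<^esub> w)"
    unfolding du_eq using s' wX by (simp add: mod_hom_add[OF chain_map_hom[OF q]] q_first[OF w])
  also have "\<dots> = corrected_splitting s q (i + 1) (diff Y i y)"
    using s' chain_map_closed[OF q s'] wX dy by (simp add: corrected_splitting_def X1.N.add_minus_add)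
  finally show "corrected_splitting s q (i + 1) (diff Y i y) = diff X i (corrected_splitting s q i y)" ..
qed

lemma two_summands_retraction:
  assumes irr: "irreducible L n X Y f"
    and A: "A i \<noteq> {\<zero>\<^bsub>obj X i\<^esub>}" and B: "B j \<noteq> {\<zero>\<^bsub>obj X j\<^esub>}"
  shows "is_retraction L X Y f"
proof -
  interpret S: ker_decomposition L n X Y f t B A by (rule swap)
  obtain sA where sA: "chain_map L Y X_mod_A sA" and fsA: "\<And>i y. y \<in> carrier (obj Y i) \<Longrightarrow> f i (sA i y) = y"
    using quotient_splitting[OF irr A] by blast
  obtain sB where sB: "chain_map L Y S.X_mod_A sB" and fsB: "\<And>i y. y \<in> carrier (obj Y i) \<Longrightarrow> f i (sB i y) = y"
    using S.quotient_splitting[OF irr B] by blast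
  note q = S.splitting_projection_chain[OF sB fsB] S.splitting_projection_second[OF sB fsB]
    S.splitting_projection_on_second[OF sB]
  show ?thesis
    by (rule is_retractionI[OF Y_complex f corrected_splitting_chain[OF sA q(1,3)]
          corrected_splitting_right_inverse[OF sA fsA q(1,2)]])
qed

end
lemma choose_sections:
  assumes "\<And>i. mod_retraction L (obj X i) (obj Y i) (f i)"
  obtains t where "\<And>i. t i \<in> mod_hom L (obj Y i) (obj X i)"
    "\<And>i y. y \<in> carrier (obj Y i) \<Longrightarrow> f i (t i y) = y"
proof -
  have "\<forall>i. \<exists>t. t \<in> mod_hom L (obj Y i) (obj X i) \<and> (\<forall>y\<in>carrier (obj Y i). f i (t y) = y)"
    using assms unfolding mod_retraction_def by blast
  then show ?thesis
    using that by metis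
qed

theorem ker_of_type_ret:
  assumes ret: "type_ret L n X Y f"
  shows "in_Cn L n (ker_cplx X Y f) \<and> indecomposable L (ker_cplx X Y f)"
proof -
  have irr: "irreducible L n X Y f" and rets: "\<And>i. mod_retraction L (obj X i) (obj Y i) (f i)"
    using ret unfolding type_ret_def by blast+
  then have X: "in_Cn L n X" and Y: "in_Cn L n Y" and f: "chain_map L X Y f"
    and not_section: "\<not> is_section L X Y f" and not_retraction: "\<not> is_retraction L X Y f"
    unfolding irreducible_def by blast+
  obtain t where t: "\<And>i. t i \<in> mod_hom L (obj Y i) (obj X i)"
    and ft: "\<And>i y. y \<in> carrier (obj Y i) \<Longrightarrow> f i (t i y) = y"
    using choose_sections[OF rets] by blast
  have Ker: "in_Cn L n (ker_cplx X Y f)"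
    by (rule ker_cplx_in_Cn[OF X Y f t ft])
  have "indecomposable L (ker_cplx X Y f)"
    unfolding indecomposable_iff
  proof (intro conjI allI impI)
    show "is_complex L (ker_cplx X Y f)"
      by (rule in_Cn_complex[OF Ker])
    show "\<not> (\<forall>i. zero_mod (obj (ker_cplx X Y f) i))"
      by (rule ker_cplx_nonzero[OF X Y f ft t not_section])
    fix A B assume "is_decomposition L (ker_cplx X Y f) A B"
    then interpret ker_decomposition L n X Y f t A B
      using X Y f t ft by unfold_locales
    show "(\<forall>i. A i = {\<zero>\<^bsub>obj (ker_cplx X Y f) i\<^esub>}) \<or> (\<forall>i. B i = {\<zero>\<^bsub>obj (ker_cplx X Y f) i\<^esub>})"
      using two_summands_retraction[OF irr] not_retraction by (auto simp: ker_cplx_eq_subcomplex)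
  qed
  with Ker show ?thesis ..
qed
section \<open>Cokernels of irreducible morphisms of type (sec)\<close>

text \<open>The cokernel is realised on the complement \<open>D = Ker r\<close> of \<open>Im f\<close>, with the differential
  projected back to \<open>D\<close>.\<close>
locale coker_setting =
  fixes L :: "('r, 'y) ring_scheme" and n :: nat and X :: "('a, 'r) cplx" and Y :: "('b, 'r) cplx"
    and f :: "int \<Rightarrow> 'a \<Rightarrow> 'b" and r :: "int \<Rightarrow> 'b \<Rightarrow> 'a"
  assumes X_in_Cn: "in_Cn L n X" and Y_in_Cn: "in_Cn L n Y" and f: "chain_map L X Y f"
    and r: "\<And>i. r i \<in> mod_hom L (obj Y i) (obj X i)"
    and rf: "\<And>i x. x \<in> carrier (obj X i) \<Longrightarrow> r i (f i x) = x"
begin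

abbreviation D :: "int \<Rightarrow> 'b set"
  where "D i \<equiv> mod_ker (obj Y i) (obj X i) (r i)"

definition eD :: "int \<Rightarrow> 'b \<Rightarrow> 'b"
  where "eD i = complement_map (obj Y i) (compose (carrier (obj Y i)) (f i) (r i))"

definition Cok :: "('b, 'r) cplx"
  where "Cok = projected_cplx Y D eD"

lemma X_complex: "is_complex L X"
  using X_in_Cn by (rule in_Cn_complex)

lemma Y_complex: "is_complex L Y"
  using Y_in_Cn by (rule in_Cn_complex)

lemma Y_rmod: "rmod L (obj Y i)"
  by (rule complex_rmod[OF Y_complex])

lemma XY_pair: "mod_hom_pair L (obj X i) (obj Y j)"
  by (rule mod_hom_pairI[OF complex_module[OF X_complex] complex_module[OF Y_complex]])

lemma YX_pair: "mod_hom_pair L (obj Y i) (obj X j)"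
  by (rule mod_hom_pairI[OF complex_module[OF Y_complex] complex_module[OF X_complex]])

lemma YY_pair: "mod_hom_pair L (obj Y i) (obj Y j)"
  by (rule mod_hom_pairI[OF complex_module[OF Y_complex] complex_module[OF Y_complex]])

lemma f_hom: "f i \<in> mod_hom L (obj X i) (obj Y i)"
  by (rule chain_map_hom[OF f])

lemma D_submodule: "submodule L (D i) (obj Y i)"
  by (rule mod_hom_pair.submodule_mod_ker[OF YX_pair r])

lemma eD_projection: "projection_onto L (obj Y i) (D i) (eD i)"
  unfolding eD_def by (rule mod_hom_pair.projection_onto_kernel(1)[OF YX_pair r f_hom rf])

lemma eD_hom: "eD i \<in> mod_hom L (obj Y i) (obj Y i)"
  by (rule projection_ontoD(1)[OF eD_projection])

lemma eD_f: "x \<in> carrier (obj X i) \<Longrightarrow> eD i (f i x) = \<zero>\<^bsub>obj Y i\<^esub>"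
  unfolding eD_def by (rule mod_hom_pair.projection_onto_kernel(2)[OF YX_pair r f_hom rf])

lemma eD_eq: "y \<in> carrier (obj Y i) \<Longrightarrow> eD i y = y \<ominus>\<^bsub>obj Y i\<^esub> f i (r i y)"
  by (simp add: eD_def complement_map_def compose_def)

lemma eD_diff:
  assumes y: "y \<in> carrier (obj Y i)"
  shows "eD (i + 1) (diff Y i (eD i y)) = eD (i + 1) (diff Y i y)"
proof -
  interpret Y1: mod_hom_pair L "obj Y i" "obj Y (i + 1)" by (rule YY_pair)
  interpret Y2: mod_hom_pair L "obj Y (i + 1)" "obj Y (i + 1)" by (rule YY_pair)
  have ry: "r i y \<in> carrier (obj X i)"
    using mod_hom_closed[OF r y] .
  have fry: "f i (r i y) \<in> carrier (obj Y i)"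
    using mod_hom_closed[OF f_hom ry] .
  have dy: "diff Y i y \<in> carrier (obj Y (i + 1))"
    using complex_diff_closed[OF Y_complex y] .
  have drf: "diff Y i (f i (r i y)) = f (i + 1) (diff X i (r i y))"
    using chain_map_diff[OF f ry] by simp
  have dX: "f (i + 1) (diff X i (r i y)) \<in> carrier (obj Y (i + 1))"
    using complex_diff_closed[OF Y_complex fry] drf by simp
  have "diff Y i (eD i y) = diff Y i y \<ominus>\<^bsub>obj Y (i + 1)\<^esub> f (i + 1) (diff X i (r i y))"
    using y fry by (simp add: eD_eq Y1.hom_minus[OF complex_diff_hom[OF Y_complex]] drf)
  then have "eD (i + 1) (diff Y i (eD i y)) = eD (i + 1) (diff Y i y) \<ominus>\<^bsub>obj Y (i + 1)\<^esub> eD (i + 1) (f (i + 1) (diff X i (r i y)))"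
    using dy dX by (simp add: Y2.hom_minus[OF eD_hom])
  then show ?thesis
    using eD_f[OF complex_diff_closed[OF X_complex ry]] mod_hom_closed[OF eD_hom dy] by simp
qed

lemma Cok_complex: "is_complex L Cok"
  unfolding Cok_def by (rule projected_cplx_complex[OF Y_complex D_submodule eD_projection eD_diff])

lemma Cok_in_Cn: "in_Cn L n Cok"
  by (rule in_Cn_restrict[OF Y_in_Cn Cok_complex _ D_submodule eD_projection]) (simp add: Cok_def)

end
lemma coker_obj [simp]:
  "carrier (obj (coker_cplx X Y f) i) = coset_of X Y f i ` carrier (obj Y i)"
  "\<zero>\<^bsub>obj (coker_cplx X Y f) i\<^esub> = coset_of X Y f i \<zero>\<^bsub>obj Y i\<^esub>"
  "U \<oplus>\<^bsub>obj (coker_cplx X Y f) i\<^esub> V = {u \<oplus>\<^bsub>obj Y i\<^esub> v | u v. u \<in> U \<and> v \<in> V}"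
  "rsmult (obj (coker_cplx X Y f) i) U a = (\<Union>u\<in>U. coset_of X Y f i (rsmult (obj Y i) u a))"
  by (simp_all add: coker_cplx_def)

lemma coker_diff:
  "diff (coker_cplx X Y f) i =
    (\<lambda>U\<in>coset_of X Y f i ` carrier (obj Y i). \<Union>u\<in>U. coset_of X Y f (i + 1) (diff Y i u))"
  by (simp add: coker_cplx_def)

context coker_setting
begin

abbreviation cs :: "int \<Rightarrow> 'b \<Rightarrow> 'b set"
  where "cs i y \<equiv> coset_of X Y f i y"

lemma cs_eq: "cs i y = {y \<oplus>\<^bsub>obj Y i\<^esub> f i x | x. x \<in> carrier (obj X i)}"
  unfolding coset_of_def by blast

lemma cs_elem: "u \<in> cs i y \<Longrightarrow> \<exists>x\<in>carrier (obj X i). u = y \<oplus>\<^bsub>obj Y i\<^esub> f i x"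
  unfolding cs_eq by blast

lemma cs_mem:
  assumes y: "y \<in> carrier (obj Y i)"
  shows "y \<in> cs i y"
proof -
  interpret mod_hom_pair L "obj X i" "obj Y i" by (rule XY_pair)
  have "y = y \<oplus>\<^bsub>obj Y i\<^esub> f i \<zero>\<^bsub>obj X i\<^esub>"
    using y hom_zero[OF f_hom] by simp
  then show ?thesis
    unfolding cs_eq by blast
qed

lemma cs_shift:
  assumes y: "y \<in> carrier (obj Y i)" and x: "x \<in> carrier (obj X i)"
  shows "cs i (y \<oplus>\<^bsub>obj Y i\<^esub> f i x) = cs i y"
  unfolding cs_eq
proof (intro equalityI subsetI)
  interpret mod_hom_pair L "obj X i" "obj Y i" by (rule XY_pair)
  have fx: "f i x \<in> carrier (obj Y i)"
    using mod_hom_closed[OF f_hom x] .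
  fix u
  assume "u \<in> {y \<oplus>\<^bsub>obj Y i\<^esub> f i x \<oplus>\<^bsub>obj Y i\<^esub> f i x' | x'. x' \<in> carrier (obj X i)}"
  then obtain x' where x': "x' \<in> carrier (obj X i)" "u = y \<oplus>\<^bsub>obj Y i\<^esub> f i x \<oplus>\<^bsub>obj Y i\<^esub> f i x'"
    by blast
  then have "u = y \<oplus>\<^bsub>obj Y i\<^esub> f i (x \<oplus>\<^bsub>obj X i\<^esub> x')"
    using x y fx mod_hom_closed[OF f_hom x'(1)] by (simp add: mod_hom_add[OF f_hom] N.a_assoc)
  then show "u \<in> {y \<oplus>\<^bsub>obj Y i\<^esub> f i x' | x'. x' \<in> carrier (obj X i)}"
    using x x' by blast
next
  interpret mod_hom_pair L "obj X i" "obj Y i" by (rule XY_pair)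
  have fx: "f i x \<in> carrier (obj Y i)"
    using mod_hom_closed[OF f_hom x] .
  fix u assume "u \<in> {y \<oplus>\<^bsub>obj Y i\<^esub> f i x' | x'. x' \<in> carrier (obj X i)}"
  then obtain x' where x': "x' \<in> carrier (obj X i)" "u = y \<oplus>\<^bsub>obj Y i\<^esub> f i x'"
    by blast
  have "f i (x' \<ominus>\<^bsub>obj X i\<^esub> x) = f i x' \<ominus>\<^bsub>obj Y i\<^esub> f i x"
    using x x' by (simp add: hom_minus[OF f_hom])
  then have "u = y \<oplus>\<^bsub>obj Y i\<^esub> f i x \<oplus>\<^bsub>obj Y i\<^esub> f i (x' \<ominus>\<^bsub>obj X i\<^esub> x)"
    using x' x y fx mod_hom_closed[OF f_hom x'(1)] by (simp add: N.a_assoc)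
  then show "u \<in> {y \<oplus>\<^bsub>obj Y i\<^esub> f i x \<oplus>\<^bsub>obj Y i\<^esub> f i x' | x'. x' \<in> carrier (obj X i)}"
    using x x' by blast
qed

lemma cs_eD:
  assumes y: "y \<in> carrier (obj Y i)"
  shows "cs i (eD i y) = cs i y"
proof -
  interpret mod_hom_pair L "obj X i" "obj Y i" by (rule XY_pair)
  have ry: "r i y \<in> carrier (obj X i)"
    using mod_hom_closed[OF r y] .
  have "eD i y = y \<oplus>\<^bsub>obj Y i\<^esub> f i (\<ominus>\<^bsub>obj X i\<^esub> r i y)"
    using y ry by (simp add: eD_eq a_minus_def hom_neg[OF f_hom])
  then show ?thesis
    using cs_shift[OF y M.a_inv_closed[OF ry]] by simp
qed

lemma cs_inj:
  assumes y: "y \<in> D i" and y': "y' \<in> D i" and eq: "cs i y = cs i y'"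
  shows "y = y'"
proof -
  interpret mod_hom_pair L "obj X i" "obj Y i" by (rule XY_pair)
  have "y \<in> cs i y'"
    using eq cs_mem y by auto
  then obtain x where x: "x \<in> carrier (obj X i)" "y = y' \<oplus>\<^bsub>obj Y i\<^esub> f i x"
    using cs_elem by blast
  have "r i y = r i y' \<oplus>\<^bsub>obj X i\<^esub> r i (f i x)"
    using x y' mod_hom_closed[OF f_hom x(1)] by (simp add: mod_hom_add[OF r])
  then have "x = \<zero>\<^bsub>obj X i\<^esub>"
    using x y y' rf by simp
  then show "y = y'"
    using x y' hom_zero[OF f_hom] by simp
qed

lemma cs_add:
  assumes y: "y \<in> carrier (obj Y i)" and y': "y' \<in> carrier (obj Y i)"
  shows "cs i (y \<oplus>\<^bsub>obj Y i\<^esub> y') = {u \<oplus>\<^bsub>obj Y i\<^esub> v | u v. u \<in> cs i y \<and> v \<in> cs i y'}"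
proof (intro equalityI subsetI)
  interpret mod_hom_pair L "obj X i" "obj Y i" by (rule XY_pair)
  fix w assume "w \<in> cs i (y \<oplus>\<^bsub>obj Y i\<^esub> y')"
  then obtain x where x: "x \<in> carrier (obj X i)" "w = (y \<oplus>\<^bsub>obj Y i\<^esub> y') \<oplus>\<^bsub>obj Y i\<^esub> f i x"
    using cs_elem by blast
  have "w = (y \<oplus>\<^bsub>obj Y i\<^esub> f i x) \<oplus>\<^bsub>obj Y i\<^esub> y'"
    using x y y' mod_hom_closed[OF f_hom x(1)] by (simp add: N.a_ac)
  moreover have "y \<oplus>\<^bsub>obj Y i\<^esub> f i x \<in> cs i y"
    using x unfolding cs_eq by blast
  ultimately show "w \<in> {u \<oplus>\<^bsub>obj Y i\<^esub> v | u v. u \<in> cs i y \<and> v \<in> cs i y'}"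
    using cs_mem[OF y'] by blast
next
  interpret mod_hom_pair L "obj X i" "obj Y i" by (rule XY_pair)
  fix w assume "w \<in> {u \<oplus>\<^bsub>obj Y i\<^esub> v | u v. u \<in> cs i y \<and> v \<in> cs i y'}"
  then obtain u v where uv: "u \<in> cs i y" "v \<in> cs i y'" "w = u \<oplus>\<^bsub>obj Y i\<^esub> v"
    by blast
  obtain x where x: "x \<in> carrier (obj X i)" "u = y \<oplus>\<^bsub>obj Y i\<^esub> f i x"
    using cs_elem[OF uv(1)] by blast
  obtain x' where x': "x' \<in> carrier (obj X i)" "v = y' \<oplus>\<^bsub>obj Y i\<^esub> f i x'"
    using cs_elem[OF uv(2)] by blast
  have "w = (y \<oplus>\<^bsub>obj Y i\<^esub> y') \<oplus>\<^bsub>obj Y i\<^esub> f i (x \<oplus>\<^bsub>obj X i\<^esub> x')"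
    using uv x x' y y' mod_hom_closed[OF f_hom x(1)] mod_hom_closed[OF f_hom x'(1)]
    by (simp add: mod_hom_add[OF f_hom] N.a_ac)
  then show "w \<in> cs i (y \<oplus>\<^bsub>obj Y i\<^esub> y')"
    unfolding cs_eq using x x' by blast
qed

lemma cs_Union:
  assumes "y \<in> carrier (obj Y i)" and "\<And>u. u \<in> cs i y \<Longrightarrow> cs j (g u) = cs j (g y)"
  shows "(\<Union>u\<in>cs i y. cs j (g u)) = cs j (g y)"
  using assms cs_mem by blast

lemma cs_smult:
  assumes y: "y \<in> carrier (obj Y i)" and a: "a \<in> carrier L"
  shows "cs i (rsmult (obj Y i) y a) = (\<Union>u\<in>cs i y. cs i (rsmult (obj Y i) u a))"
proof (rule cs_Union[OF y, symmetric])
  interpret mod_hom_pair L "obj X i" "obj Y i" by (rule XY_pair)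
  fix u assume "u \<in> cs i y"
  then obtain x where x: "x \<in> carrier (obj X i)" "u = y \<oplus>\<^bsub>obj Y i\<^esub> f i x"
    using cs_elem by blast
  then have "rsmult (obj Y i) u a = rsmult (obj Y i) y a \<oplus>\<^bsub>obj Y i\<^esub> f i (rsmult (obj X i) x a)"
    using y a mod_hom_closed[OF f_hom x(1)] by (simp add: N.smult_add mod_hom_smult[OF f_hom])
  then show "cs i (rsmult (obj Y i) u a) = cs i (rsmult (obj Y i) y a)"
    using cs_shift y a x by simp
qed

lemma cs_diff:
  assumes y: "y \<in> carrier (obj Y i)"
  shows "(\<Union>u\<in>cs i y. cs (i + 1) (diff Y i u)) = cs (i + 1) (diff Y i y)"
proof (rule cs_Union[OF y])
  fix u assume "u \<in> cs i y"
  then obtain x where x: "x \<in> carrier (obj X i)" "u = y \<oplus>\<^bsub>obj Y i\<^esub> f i x"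
    using cs_elem by blast
  then have "diff Y i u = diff Y i y \<oplus>\<^bsub>obj Y (i + 1)\<^esub> f (i + 1) (diff X i x)"
    using y mod_hom_closed[OF f_hom x(1)]
    by (simp add: mod_hom_add[OF complex_diff_hom[OF Y_complex]] chain_map_diff[OF f])
  then show "cs (i + 1) (diff Y i u) = cs (i + 1) (diff Y i y)"
    using cs_shift[OF complex_diff_closed[OF Y_complex y] complex_diff_closed[OF X_complex x(1)]] by simp
qed

lemma coker_transfer: "cplx_transfer L Cok (coker_cplx X Y f) cs"
proof (unfold_locales, goal_cases)
  case 1
  show ?case by (rule Cok_complex)
next
  case (2 i)
  show ?case
    unfolding bij_betw_def
  proof
    show "inj_on (cs i) (carrier (obj Cok i))"
      using cs_inj by (auto simp: Cok_def intro!: inj_onI)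
    show "cs i ` carrier (obj Cok i) = carrier (obj (coker_cplx X Y f) i)"
    proof (intro equalityI subsetI)
      fix U assume "U \<in> cs i ` carrier (obj Cok i)"
      then show "U \<in> carrier (obj (coker_cplx X Y f) i)"
        by (auto simp: Cok_def)
    next
      fix U assume "U \<in> carrier (obj (coker_cplx X Y f) i)"
      then obtain y where y: "y \<in> carrier (obj Y i)" "U = cs i y"
        by auto
      then have "U = cs i (eD i y)"
        using cs_eD by simp
      then show "U \<in> cs i ` carrier (obj Cok i)"
        using projection_ontoD(2)[OF eD_projection y(1)] by (simp add: Cok_def)
    qed
  qed
next
  case (3 i x y)
  then show ?case
    using cs_add by (simp add: Cok_def)
next
  case (4 i x a)
  then show ?case
    using cs_smult by (simp add: Cok_def)
next
  case (6 i y)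
  then have y: "y \<in> D i"
    by (simp add: Cok_def)
  have dy: "diff Y i y \<in> carrier (obj Y (i + 1))"
    using y complex_diff_closed[OF Y_complex] by simp
  have "cs (i + 1) (diff Cok i y) = cs (i + 1) (diff Y i y)"
    using y cs_eD[OF dy] by (simp add: Cok_def)
  also have "\<dots> = diff (coker_cplx X Y f) i (cs i y)"
    using y cs_diff by (simp add: coker_diff)
  finally show ?case .
qed (simp_all add: coker_diff Cok_def)

end
locale coker_decomposition = coker_setting L n X Y f r
  for L :: "('r, 'y) ring_scheme" and n :: nat and X :: "('a, 'r) cplx" and Y :: "('b, 'r) cplx"
    and f :: "int \<Rightarrow> 'a \<Rightarrow> 'b" and r :: "int \<Rightarrow> 'b \<Rightarrow> 'a" +
  fixes A B :: "int \<Rightarrow> 'b set"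
  assumes decomposition: "is_decomposition L Cok A B"
begin

lemma swap: "coker_decomposition L n X Y f r B A"
  by (rule coker_decomposition.intro[OF coker_setting_axioms])
    (rule coker_decomposition_axioms.intro[OF is_decomposition_swap[OF Cok_complex decomposition]])

lemma summands:
  shows "submodule L (A i) (obj Y i)" "submodule L (B i) (obj Y i)"
    and "A i \<subseteq> D i" "B i \<subseteq> D i"
    and "a \<in> A i \<Longrightarrow> eD (i + 1) (diff Y i a) \<in> A (i + 1)"
    and "A i \<inter> B i = {\<zero>\<^bsub>obj Y i\<^esub>}"
    and "k \<in> D i \<Longrightarrow> \<exists>a\<in>A i. \<exists>b\<in>B i. k = a \<oplus>\<^bsub>obj Y i\<^esub> b"
proof -
  note Dec = is_decompositionD[OF decomposition, of i, unfolded Cok_def projected_cplx_obj projected_cplx_diff]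
  show AD: "A i \<subseteq> D i" and "B i \<subseteq> D i"
    using submodule_subset[OF Dec(1)] submodule_subset[OF Dec(2)] by simp_all
  show "submodule L (A i) (obj Y i)" "submodule L (B i) (obj Y i)"
    using rmod.submodule_trans[OF Y_rmod D_submodule] Dec(1,2) by blast+
  show "eD (i + 1) (diff Y i a) \<in> A (i + 1)" if a: "a \<in> A i"
  proof -
    have "(\<lambda>x\<in>D i. eD (i + 1) (diff Y i x)) a \<in> A (i + 1)"
      using Dec(3) a by blast
    then show ?thesis
      using AD a by auto
  qed
  show "A i \<inter> B i = {\<zero>\<^bsub>obj Y i\<^esub>}"
    using Dec(5) by simp
  have DE: "D i = {a \<oplus>\<^bsub>obj Y i\<^esub> b |a b. a \<in> A i \<and> b \<in> B i}"
    using Dec(6) by simp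
  show "k \<in> D i \<Longrightarrow> \<exists>a\<in>A i. \<exists>b\<in>B i. k = a \<oplus>\<^bsub>obj Y i\<^esub> b"
    unfolding DE by blast
qed

lemma degree_decomposition: "decomposed_projection L (obj Y i) (D i) (A i) (B i) (eD i)"
proof (intro decomposed_projection.intro decomposed_projection_axioms.intro)
  show "rmod L (obj Y i)"
    by (rule Y_rmod)
  show "projection_onto L (obj Y i) (D i) (eD i)"
    by (rule eD_projection)
  show "submodule L (A i) (obj Y i)" "submodule L (B i) (obj Y i)" "A i \<subseteq> D i" "B i \<subseteq> D i"
    "A i \<inter> B i = {\<zero>\<^bsub>obj Y i\<^esub>}"
    by (rule summands)+
  show "\<And>k. k \<in> D i \<Longrightarrow> \<exists>a\<in>A i. \<exists>b\<in>B i. k = a \<oplus>\<^bsub>obj Y i\<^esub> b"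
    by (rule summands(7))
qed

definition \<pi>A :: "int \<Rightarrow> 'b \<Rightarrow> 'b"
  where "\<pi>A i = decomposed_projection.proj (obj Y i) (A i) (B i) (eD i)"

lemmas \<pi>A_hom = decomposed_projection.proj_hom[OF degree_decomposition, folded \<pi>A_def]
lemmas \<pi>A_mem = decomposed_projection.proj_mem[OF degree_decomposition, folded \<pi>A_def]
lemmas \<pi>A_first = decomposed_projection.proj_first[OF degree_decomposition, folded \<pi>A_def]
lemmas \<pi>A_second = decomposed_projection.proj_second[OF degree_decomposition, folded \<pi>A_def]
lemmas \<pi>A_idem = decomposed_projection.proj_idem[OF degree_decomposition, folded \<pi>A_def]
lemmas \<pi>A_carrier = decomposed_projection.proj_carrier[OF degree_decomposition, folded \<pi>A_def]
lemmas \<pi>A_vanishes = decomposed_projection.proj_vanishes[OF degree_decomposition, folded \<pi>A_def]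
lemmas \<pi>A_retract = decomposed_projection.proj_retract[OF degree_decomposition, folded \<pi>A_def]

lemma \<pi>A_f: "x \<in> carrier (obj X i) \<Longrightarrow> \<pi>A i (f i x) = \<zero>\<^bsub>obj Y i\<^esub>"
  using \<pi>A_vanishes[OF mod_hom_closed[OF f_hom]] eD_f by blast

abbreviation W :: "int \<Rightarrow> 'b set"
  where "W i \<equiv> mod_ker (obj Y i) (obj Y i) (\<pi>A i)"

definition ec :: "int \<Rightarrow> 'b \<Rightarrow> 'b"
  where "ec i = complement_map (obj Y i) (\<pi>A i)"

lemma W_submodule: "submodule L (W i) (obj Y i)"
  by (rule mod_hom_pair.submodule_mod_ker[OF YY_pair \<pi>A_hom])

lemma ec_projection: "projection_onto L (obj Y i) (W i) (ec i)"
  unfolding ec_def by (rule rmod.projection_onto_complement[OF Y_rmod \<pi>A_hom \<pi>A_idem])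

lemma ec_eq: "y \<in> carrier (obj Y i) \<Longrightarrow> ec i y = y \<ominus>\<^bsub>obj Y i\<^esub> \<pi>A i y"
  by (simp add: ec_def complement_map_def)

lemma eD_in_second:
  assumes y: "y \<in> W i"
  shows "eD i y \<in> B i"
proof -
  interpret rmod L "obj Y i" by (rule Y_rmod)
  show ?thesis
    using \<pi>A_mem(2)[of y i] y projection_ontoD(2)[OF eD_projection] by simp
qed

lemma second_in_W: "b \<in> B i \<Longrightarrow> b \<in> W i"
  using \<pi>A_second submodule_carrier[OF summands(2)] by simp

lemma f_in_W: "x \<in> carrier (obj X i) \<Longrightarrow> f i x \<in> W i"
  using \<pi>A_f mod_hom_closed[OF f_hom] by simp

lemma W_diff:
  assumes y: "y \<in> W i"
  shows "diff Y i y \<in> W (i + 1)"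
proof -
  interpret S: coker_decomposition L n X Y f r B A by (rule swap)
  have yY: "y \<in> carrier (obj Y i)" and k: "eD i y \<in> B i"
    using y eD_in_second[OF y] by simp_all
  have dy: "diff Y i y \<in> carrier (obj Y (i + 1))"
    using complex_diff_closed[OF Y_complex yY] .
  have "\<pi>A (i + 1) (diff Y i y) = \<pi>A (i + 1) (eD (i + 1) (diff Y i (eD i y)))"
    using \<pi>A_retract[OF dy] eD_diff[OF yY] by simp
  also have "\<dots> = \<zero>\<^bsub>obj Y (i + 1)\<^esub>"
    using \<pi>A_second[OF S.summands(5)[OF k]] .
  finally show ?thesis
    using dy by simp
qed

definition Y_mod_A :: "('b, 'r) cplx"
  where "Y_mod_A = subcomplex Y W"

definition inc :: "int \<Rightarrow> 'b \<Rightarrow> 'b"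
  where "inc i = (\<lambda>y\<in>W i. y)"

lemma W_diff_image: "diff Y i ` W i \<subseteq> W (i + 1)"
  using W_diff by blast

lemma Y_mod_A_in_Cn: "in_Cn L n Y_mod_A"
  unfolding Y_mod_A_def
  by (rule in_Cn_restrict[OF Y_in_Cn subcomplex_complex[OF Y_complex W_submodule W_diff_image] _
        W_submodule ec_projection]) simp

lemma inc_chain: "chain_map L Y_mod_A Y inc"
  unfolding Y_mod_A_def inc_def by (rule subcomplex_inclusion[OF Y_complex W_submodule W_diff_image])

lemma f_into_Y_mod_A: "chain_map L X Y_mod_A f"
  unfolding Y_mod_A_def by (rule chain_map_into_subcomplex[OF f f_in_W])

lemma f_factors: "f = cmp X inc f"
proof (rule chain_map_eqI[OF f chain_map_cmp[OF X_complex f_into_Y_mod_A inc_chain]])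
  fix i x assume x: "x \<in> carrier (obj X i)"
  then show "f i x = cmp X inc f i x"
    using f_in_W[OF x] by (simp add: inc_def)
qed

lemma inc_not_retraction:
  assumes "A i \<noteq> {\<zero>\<^bsub>obj Y i\<^esub>}"
  shows "\<not> is_retraction L Y_mod_A Y inc"
proof
  assume "is_retraction L Y_mod_A Y inc"
  then obtain s where s: "chain_map L Y Y_mod_A s" and "\<And>j y. y \<in> carrier (obj Y j) \<Longrightarrow> inc j (s j y) = y"
    by (erule is_retractionE)
  have "y \<in> W j" if y: "y \<in> carrier (obj Y j)" for j y
  proof -
    have "s j y \<in> W j"
      using chain_map_closed[OF s y] by (simp add: Y_mod_A_def)
    then show ?thesis
      using \<open>\<And>j y. y \<in> carrier (obj Y j) \<Longrightarrow> inc j (s j y) = y\<close>[OF y] by (simp add: inc_def)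
  qed
  moreover obtain a where a: "a \<in> A i" "a \<noteq> \<zero>\<^bsub>obj Y i\<^esub>"
    using assms submodule_zero[OF summands(1)] by blast
  ultimately show False
    using \<pi>A_first[OF a(1)] submodule_carrier[OF summands(1) a(1)] by simp
qed

lemma subcomplex_retraction:
  assumes irr: "irreducible L n X Y f" and nonzero: "A i \<noteq> {\<zero>\<^bsub>obj Y i\<^esub>}"
  obtains \<rho> where "chain_map L Y_mod_A X \<rho>" "\<And>i x. x \<in> carrier (obj X i) \<Longrightarrow> \<rho> i (f i x) = x"
proof -
  have "is_section L X Y_mod_A f"
    using irreducible_factorization[OF irr Y_mod_A_in_Cn f_into_Y_mod_A inc_chain f_factors]
      inc_not_retraction[OF nonzero] by blast
  then obtain \<rho> where "chain_map L Y_mod_A X \<rho>" "\<And>i x. x \<in> carrier (obj X i) \<Longrightarrow> \<rho> i (f i x) = x"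
    by (erule is_sectionE)
  then show ?thesis
    using that by blast
qed

end
lemma (in coker_setting) Cok_nonzero:
  assumes not_retraction: "\<not> is_retraction L X Y f"
  shows "\<not> (\<forall>i. zero_mod (obj Cok i))"
proof
  assume zero: "\<forall>i. zero_mod (obj Cok i)"
  have "bij_betw (f i) (carrier (obj X i)) (carrier (obj Y i))" for i
  proof -
    interpret rmod L "obj Y i" by (rule Y_rmod)
    have D0: "D i = {\<zero>\<^bsub>obj Y i\<^esub>}"
      using zero unfolding zero_mod_def by (simp add: Cok_def)
    have "inj_on (f i) (carrier (obj X i))"
      by (rule inj_on_inverseI[of _ "r i"]) (simp add: rf)
    moreover have "f i ` carrier (obj X i) = carrier (obj Y i)"
    proof (intro equalityI subsetI)
      fix y assume y: "y \<in> carrier (obj Y i)"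
      have "eD i y = \<zero>\<^bsub>obj Y i\<^esub>"
        using projection_ontoD(2)[OF eD_projection y] D0 by blast
      then have "y = f i (r i y)"
        using y mod_hom_closed[OF f_hom mod_hom_closed[OF r y]] minus_eq_zero_iff by (simp add: eD_eq)
      then show "y \<in> f i ` carrier (obj X i)"
        using mod_hom_closed[OF r y] by blast
    qed (use mod_hom_closed[OF f_hom] in blast)
    ultimately show ?thesis
      by (simp add: bij_betw_def)
  qed
  then show False
    using not_retraction bij_chain_map_is_retraction[OF X_complex Y_complex f] by blast
qed

text \<open>Retractions \<open>\<rho>1\<close> of \<open>f : X \<rightarrow> Y_mod_A\<close> and \<open>\<rho>2\<close> of \<open>f : X \<rightarrow> V\<close>, with \<open>V\<close> playing the role
  of \<open>Y_mod_A\<close> for the other summand, glue to a retraction of \<open>f : X \<rightarrow> Y\<close>: both agree with \<open>r\<close> on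
  \<open>W \<inter> V\<close>, which lies in the image of \<open>f\<close>.\<close>
locale glued_sections = coker_decomposition L n X Y f r A B
  for L :: "('r, 'y) ring_scheme" and n :: nat and X :: "('a, 'r) cplx" and Y :: "('b, 'r) cplx"
    and f :: "int \<Rightarrow> 'a \<Rightarrow> 'b" and r :: "int \<Rightarrow> 'b \<Rightarrow> 'a" and A B :: "int \<Rightarrow> 'b set" +
  fixes V :: "int \<Rightarrow> 'b set" and \<rho>1 \<rho>2 :: "int \<Rightarrow> 'b \<Rightarrow> 'a"
  assumes V_submodule: "\<And>i. submodule L (V i) (obj Y i)"
    and first_subset_V: "\<And>i. A i \<subseteq> V i"
    and eD_V: "\<And>i z. z \<in> V i \<Longrightarrow> eD i z \<in> A i"
    and V_diff: "\<And>i. diff Y i ` V i \<subseteq> V (i + 1)"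
    and \<rho>1: "chain_map L Y_mod_A X \<rho>1" and \<rho>1f: "\<And>i x. x \<in> carrier (obj X i) \<Longrightarrow> \<rho>1 i (f i x) = x"
    and \<rho>2: "chain_map L (subcomplex Y V) X \<rho>2" and \<rho>2f: "\<And>i x. x \<in> carrier (obj X i) \<Longrightarrow> \<rho>2 i (f i x) = x"
begin

definition glued :: "int \<Rightarrow> 'b \<Rightarrow> 'a"
  where "glued i = (\<lambda>y\<in>carrier (obj Y i). \<rho>1 i (ec i y) \<oplus>\<^bsub>obj X i\<^esub> \<rho>2 i (\<pi>A i y))"

lemma \<rho>2_hom: "\<rho>2 i \<in> mod_hom L ((obj Y i)\<lparr>carrier := V i\<rparr>) (obj X i)"
  using chain_map_hom[OF \<rho>2] by simp

lemma ec_W: "y \<in> carrier (obj Y i) \<Longrightarrow> ec i y \<in> W i"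
  by (rule projection_ontoD(2)[OF ec_projection])

lemma \<pi>A_V: "y \<in> carrier (obj Y i) \<Longrightarrow> \<pi>A i y \<in> V i"
  using first_subset_V \<pi>A_mem(1) by blast

lemma glued_sum:
  assumes u: "u \<in> W i" and v: "v \<in> V i"
  shows "glued i (u \<oplus>\<^bsub>obj Y i\<^esub> v) = \<rho>1 i u \<oplus>\<^bsub>obj X i\<^esub> \<rho>2 i v"
proof -
  interpret YY: mod_hom_pair L "obj Y i" "obj Y i" by (rule YY_pair)
  interpret YX: mod_hom_pair L "obj Y i" "obj X i" by (rule YX_pair)
  have uY: "u \<in> carrier (obj Y i)" and vY: "v \<in> carrier (obj Y i)"
    using u submodule_carrier[OF V_submodule v] by simp_all
  define z where "z = v \<ominus>\<^bsub>obj Y i\<^esub> \<pi>A i v"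
  have pv: "\<pi>A i v \<in> A i" "\<pi>A i v \<in> carrier (obj Y i)"
    using \<pi>A_mem(1)[OF vY] \<pi>A_carrier[OF vY] .
  have zY: "z \<in> carrier (obj Y i)"
    using vY pv by (simp add: z_def)
  have zW: "z \<in> W i"
    using zY vY pv \<pi>A_idem[OF vY] by (simp add: z_def YY.hom_minus[OF \<pi>A_hom])
  have pvV: "\<pi>A i v \<in> V i"
    using first_subset_V pv(1) by blast
  have zV: "z \<in> V i"
    unfolding z_def using submodule_minus[OF V_submodule v pvV] .
  have "eD i z = \<zero>\<^bsub>obj Y i\<^esub>"
    using eD_V[OF zV] eD_in_second[OF zW] summands(6) by blast
  then have z_im: "z = f i (r i z)"
    using zY mod_hom_closed[OF f_hom mod_hom_closed[OF r zY]] YY.M.minus_eq_zero_iff by (simp add: eD_eq)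
  have rz: "r i z \<in> carrier (obj X i)"
    using mod_hom_closed[OF r zY] .
  have \<rho>z: "\<rho>1 i z = r i z" "\<rho>2 i z = r i z"
    using \<rho>1f[OF rz] \<rho>2f[OF rz] z_im by simp_all
  have ec_sum: "ec i (u \<oplus>\<^bsub>obj Y i\<^esub> v) = u \<oplus>\<^bsub>obj Y i\<^esub> z"
    and \<pi>_sum: "\<pi>A i (u \<oplus>\<^bsub>obj Y i\<^esub> v) = \<pi>A i v"
    using u uY vY pv by (simp_all add: ec_eq z_def mod_hom_add[OF \<pi>A_hom] YY.M.a_assoc a_minus_def)
  have "\<rho>1 i (u \<oplus>\<^bsub>obj Y i\<^esub> z) = \<rho>1 i u \<oplus>\<^bsub>obj X i\<^esub> r i z"
    using mod_hom_add[OF chain_map_hom[OF \<rho>1, of i], of u z] u zW \<rho>z by (simp add: Y_mod_A_def)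
  moreover have "r i z \<oplus>\<^bsub>obj X i\<^esub> \<rho>2 i (\<pi>A i v) = \<rho>2 i v"
    using mod_hom_add[OF \<rho>2_hom[of i], of z "\<pi>A i v"] zV pvV pv vY \<rho>z by (simp add: z_def)
  moreover have "\<rho>1 i u \<in> carrier (obj X i)" "\<rho>2 i (\<pi>A i v) \<in> carrier (obj X i)"
    using chain_map_closed[OF \<rho>1, of u i] u mod_hom_closed[OF \<rho>2_hom[of i], of "\<pi>A i v"] pvV
    by (simp_all add: Y_mod_A_def)
  ultimately show ?thesis
    using uY vY rz by (simp add: glued_def ec_sum \<pi>_sum YX.N.a_assoc)
qed

lemma glued_hom: "glued i \<in> mod_hom L (obj Y i) (obj X i)"
proof -
  interpret YX: mod_hom_pair L "obj Y i" "obj X i" by (rule YX_pair)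
  have "ec i \<in> mod_hom L (obj Y i) (obj Y_mod_A i)"
    unfolding Y_mod_A_def subcomplex_obj
    by (rule mod_hom_corestrict[OF projection_ontoD(1)[OF ec_projection]]) (rule ec_W)
  then have "compose (carrier (obj Y i)) (\<rho>1 i) (ec i) \<in> mod_hom L (obj Y i) (obj X i)"
    by (rule mod_hom_compose[OF Y_rmod _ chain_map_hom[OF \<rho>1]])
  moreover have "\<pi>A i \<in> mod_hom L (obj Y i) ((obj Y i)\<lparr>carrier := V i\<rparr>)"
    by (rule mod_hom_corestrict[OF \<pi>A_hom]) (rule \<pi>A_V)
  then have "compose (carrier (obj Y i)) (\<rho>2 i) (\<pi>A i) \<in> mod_hom L (obj Y i) (obj X i)"
    by (rule mod_hom_compose[OF Y_rmod _ \<rho>2_hom])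
  ultimately have "(\<lambda>y\<in>carrier (obj Y i). compose (carrier (obj Y i)) (\<rho>1 i) (ec i) y
      \<oplus>\<^bsub>obj X i\<^esub> compose (carrier (obj Y i)) (\<rho>2 i) (\<pi>A i) y) \<in> mod_hom L (obj Y i) (obj X i)"
    by (rule YX.hom_add_fun)
  then show ?thesis
    by (simp add: glued_def compose_def cong: restrict_cong)
qed

lemma glued_chain: "chain_map L Y X glued"
  unfolding chain_map_def
proof (intro allI conjI ballI)
  fix i y
  show "glued i \<in> mod_hom L (obj Y i) (obj X i)"
    by (rule glued_hom)
  assume y: "y \<in> carrier (obj Y i)"
  interpret rmod L "obj Y i" by (rule Y_rmod)
  have "diff Y i y = diff Y i (ec i y \<oplus>\<^bsub>obj Y i\<^esub> \<pi>A i y)"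
    using y \<pi>A_carrier[OF y] by (simp add: ec_eq)
  also have "\<dots> = diff Y i (ec i y) \<oplus>\<^bsub>obj Y (i + 1)\<^esub> diff Y i (\<pi>A i y)"
    using ec_W[OF y] \<pi>A_carrier[OF y] by (simp add: mod_hom_add[OF complex_diff_hom[OF Y_complex]])
  finally have "glued (i + 1) (diff Y i y)
      = glued (i + 1) (diff Y i (ec i y) \<oplus>\<^bsub>obj Y (i + 1)\<^esub> diff Y i (\<pi>A i y))"
    by simp
  also have "\<dots> = \<rho>1 (i + 1) (diff Y i (ec i y)) \<oplus>\<^bsub>obj X (i + 1)\<^esub> \<rho>2 (i + 1) (diff Y i (\<pi>A i y))"
    using V_diff \<pi>A_V[OF y] by (intro glued_sum[OF W_diff[OF ec_W[OF y]]]) blast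
  also have "\<dots> = diff X i (glued i y)"
    using y ec_W[OF y] \<pi>A_V[OF y] chain_map_diff[OF \<rho>1, of "ec i y"] chain_map_diff[OF \<rho>2, of "\<pi>A i y"]
      chain_map_closed[OF \<rho>1, of "ec i y"] chain_map_closed[OF \<rho>2, of "\<pi>A i y"]
    by (simp add: glued_def Y_mod_A_def mod_hom_add[OF complex_diff_hom[OF X_complex]])
  finally show "glued (i + 1) (diff Y i y) = diff X i (glued i y)" .
qed

lemma glued_left_inverse:
  assumes x: "x \<in> carrier (obj X i)"
  shows "glued i (f i x) = x"
proof -
  interpret rmod L "obj X i" by (rule complex_rmod[OF X_complex])
  have "\<rho>2 i \<zero>\<^bsub>obj Y i\<^esub> = \<zero>\<^bsub>obj X i\<^esub>"
    using mod_hom_pair.hom_zero[OF mod_hom_pairI[OF rmod.right_module_restrict[OF Y_rmod V_submodule]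
          complex_module[OF X_complex]] \<rho>2_hom] by simp
  then show ?thesis
    using x mod_hom_closed[OF f_hom x] projection_ontoD(3)[OF ec_projection f_in_W[OF x]] \<rho>1f[OF x] \<pi>A_f[OF x]
    by (simp add: glued_def)
qed

end

lemma (in coker_decomposition) two_summands_section:
  assumes irr: "irreducible L n X Y f"
    and A: "A i \<noteq> {\<zero>\<^bsub>obj Y i\<^esub>}" and B: "B j \<noteq> {\<zero>\<^bsub>obj Y j\<^esub>}"
  shows "is_section L X Y f"
proof -
  interpret S: coker_decomposition L n X Y f r B A by (rule swap)
  obtain \<rho>1 where \<rho>1: "chain_map L Y_mod_A X \<rho>1" and \<rho>1f: "\<And>i x. x \<in> carrier (obj X i) \<Longrightarrow> \<rho>1 i (f i x) = x"
    using subcomplex_retraction[OF irr A] by blast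
  obtain \<rho>2 where \<rho>2: "chain_map L S.Y_mod_A X \<rho>2" and \<rho>2f: "\<And>i x. x \<in> carrier (obj X i) \<Longrightarrow> \<rho>2 i (f i x) = x"
    using S.subcomplex_retraction[OF irr B] by blast
  interpret G: glued_sections L n X Y f r A B "\<lambda>i. S.W i" \<rho>1 \<rho>2
  proof unfold_locales
    show "A i \<subseteq> S.W i" for i
      using S.second_in_W by blast
  qed (use S.W_submodule S.eD_in_second S.W_diff_image \<rho>1 \<rho>1f \<rho>2 \<rho>2f in \<open>simp_all add: S.Y_mod_A_def\<close>)
  show ?thesis
    by (rule is_sectionI[OF X_complex f G.glued_chain G.glued_left_inverse])
qed

lemma choose_retractions:
  assumes "\<And>i. mod_section L (obj X i) (obj Y i) (f i)"
  obtains r where "\<And>i. r i \<in> mod_hom L (obj Y i) (obj X i)"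
    "\<And>i x. x \<in> carrier (obj X i) \<Longrightarrow> r i (f i x) = x"
proof -
  have "\<forall>i. \<exists>r. r \<in> mod_hom L (obj Y i) (obj X i) \<and> (\<forall>x\<in>carrier (obj X i). r (f i x) = x)"
    using assms unfolding mod_section_def by blast
  then show ?thesis
    using that by metis
qed

theorem coker_of_type_sec:
  assumes sec: "type_sec L n X Y f"
  shows "in_Cn L n (coker_cplx X Y f) \<and> indecomposable L (coker_cplx X Y f)"
proof -
  have irr: "irreducible L n X Y f" and secs: "\<And>i. mod_section L (obj X i) (obj Y i) (f i)"
    using sec unfolding type_sec_def by blast+
  then have X: "in_Cn L n X" and Y: "in_Cn L n Y" and f: "chain_map L X Y f"
    and not_section: "\<not> is_section L X Y f" and not_retraction: "\<not> is_retraction L X Y f"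
    unfolding irreducible_def by blast+
  obtain r where r: "\<And>i. r i \<in> mod_hom L (obj Y i) (obj X i)"
    and rf: "\<And>i x. x \<in> carrier (obj X i) \<Longrightarrow> r i (f i x) = x"
    using choose_retractions[OF secs] by blast
  interpret coker_setting L n X Y f r
    using X Y f r rf by unfold_locales
  interpret T: cplx_transfer L Cok "coker_cplx X Y f" cs
    by (rule coker_transfer)
  have "indecomposable L Cok"
    unfolding indecomposable_iff
  proof (intro conjI allI impI)
    show "is_complex L Cok"
      by (rule Cok_complex)
    show "\<not> (\<forall>i. zero_mod (obj Cok i))"
      by (rule Cok_nonzero[OF not_retraction])
    fix A B assume "is_decomposition L Cok A B"
    then interpret coker_decomposition L n X Y f r A B
      by unfold_locales
    show "(\<forall>i. A i = {\<zero>\<^bsub>obj Cok i\<^esub>}) \<or> (\<forall>i. B i = {\<zero>\<^bsub>obj Cok i\<^esub>})"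
      using two_summands_section[OF irr] not_section by (auto simp: Cok_def)
  qed
  then show ?thesis
    using T.target_in_Cn[OF Cok_in_Cn] T.target_indecomposable by blast
qed

theorem theorem2p8:
  fixes R :: "'c ring" and phi :: "'c \<Rightarrow> 'r" and L :: "'r ring" and n :: nat
    and X :: "('a, 'r) cplx" and Y :: "('b, 'r) cplx" and f :: "int \<Rightarrow> 'a \<Rightarrow> 'b"
  assumes "artin_algebra R phi L"
    and "n \<ge> 2"
    and "in_Cn L n X" and "in_Cn L n Y"
    and "irreducible L n X Y f"
    and "indecomposable L X \<or> indecomposable L Y"
  shows "(type_ret L n X Y f \<longrightarrow>
            in_Cn L n (ker_cplx X Y f) \<and> indecomposable L (ker_cplx X Y f))
       \<and> (type_sec L n X Y f \<longrightarrow>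
            in_Cn L n (coker_cplx X Y f) \<and> indecomposable L (coker_cplx X Y f))"
  using ker_of_type_ret coker_of_type_sec by blast

end
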